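(* The Lie algebra of analytic vertical infinitesimal symplectic symmetries of $Z_{G,\epsilon}=x(x-\epsilon)\partial_x+\chi(u_1u_2,x,\epsilon)(u_1\partial_{u_1}-u_2\partial_{u_2})$ (analytic on a neighborhood of $0$ in $(u,x,\epsilon)$) consists of the Hamiltonian vector fields $\xi=a(u_1u_2,\epsilon)(u_1\partial_{u_1}-u_2\partial_{u_2})$ with $a(h,\epsilon)$ analytic, and it is commutative.
   Context: $\chi(h,x,\epsilon)=\chi^{(0)}(h,\epsilon)+x\chi^{(1)}(h,\epsilon)$ is an analytic germ, affine in $x$, with $\chi(0,0,0)\ne0$. A vertical infinitesimal symplectic symmetry of $Z_{G,\epsilon}$ is a germ of vector field $\xi$ in the $(u,x)$-space with $\xi\cdot x=0$, $\mathcal L_\xi(du_1\wedge du_2)=0$ and $[\xi,Z_{G,\epsilon}]=0$. *)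

theory Defs
  imports "HOL-Analysis.Analysis"
begin

type_synonym fn4 = "complex \<Rightarrow> complex \<Rightarrow> complex \<Rightarrow> complex \<Rightarrow> complex"
  (* arguments in the order u1 u2 x \<epsilon> *)

type_synonym vfield = "fn4 \<times> fn4 \<times> fn4"
  (* components along \<partial>u1, \<partial>u2, \<partial>x; a vector field in (u,x)-space depending on \<epsilon> *)

text \<open>Analytic germ at 0 in two complex variables: given near 0 by an
  (absolutely, i.e. unconditionally) convergent power series.\<close>
definition analytic0_2 :: "(complex \<Rightarrow> complex \<Rightarrow> complex) \<Rightarrow> bool" where
  "analytic0_2 f \<longleftrightarrow> (\<exists>r>0. \<exists>c::nat \<Rightarrow> nat \<Rightarrow> complex.
     \<forall>z1 z2. norm z1 < r \<and> norm z2 < r \<longrightarrow>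
       ((\<lambda>(i,j). c i j * z1 ^ i * z2 ^ j) has_sum f z1 z2) UNIV)"

definition analytic0_4 :: "fn4 \<Rightarrow> bool" where
  "analytic0_4 f \<longleftrightarrow> (\<exists>r>0. \<exists>c::nat \<Rightarrow> nat \<Rightarrow> nat \<Rightarrow> nat \<Rightarrow> complex.
     \<forall>z1 z2 z3 z4. norm z1 < r \<and> norm z2 < r \<and> norm z3 < r \<and> norm z4 < r \<longrightarrow>
       ((\<lambda>(i,j,k,l). c i j k l * z1 ^ i * z2 ^ j * z3 ^ k * z4 ^ l) has_sum f z1 z2 z3 z4) UNIV)"

definition near0 :: "(complex \<Rightarrow> complex \<Rightarrow> complex \<Rightarrow> complex \<Rightarrow> bool) \<Rightarrow> bool" where
  "near0 P \<longleftrightarrow> (\<exists>r>0. \<forall>u1 u2 x e. norm u1 < r \<and> norm u2 < r \<and> norm x < r \<and> norm e < r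
      \<longrightarrow> P u1 u2 x e)"

definition d_u1 :: "fn4 \<Rightarrow> fn4" where
  "d_u1 f = (\<lambda>u1 u2 x e. deriv (\<lambda>t. f t u2 x e) u1)"
definition d_u2 :: "fn4 \<Rightarrow> fn4" where
  "d_u2 f = (\<lambda>u1 u2 x e. deriv (\<lambda>t. f u1 t x e) u2)"
definition d_x :: "fn4 \<Rightarrow> fn4" where
  "d_x f = (\<lambda>u1 u2 x e. deriv (\<lambda>t. f u1 u2 t e) x)"

definition vf_apply :: "vfield \<Rightarrow> fn4 \<Rightarrow> fn4" where
  "vf_apply X F = (\<lambda>u1 u2 x e.
      fst X u1 u2 x e * d_u1 F u1 u2 x e
    + fst (snd X) u1 u2 x e * d_u2 F u1 u2 x e
    + snd (snd X) u1 u2 x e * d_x F u1 u2 x e)"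

definition lie_bracket :: "vfield \<Rightarrow> vfield \<Rightarrow> vfield" where
  "lie_bracket X Y =
     ((\<lambda>u1 u2 x e. vf_apply X (fst Y) u1 u2 x e - vf_apply Y (fst X) u1 u2 x e),
      (\<lambda>u1 u2 x e. vf_apply X (fst (snd Y)) u1 u2 x e - vf_apply Y (fst (snd X)) u1 u2 x e),
      (\<lambda>u1 u2 x e. vf_apply X (snd (snd Y)) u1 u2 x e - vf_apply Y (snd (snd X)) u1 u2 x e))"

definition germ_eq :: "vfield \<Rightarrow> vfield \<Rightarrow> bool" where
  "germ_eq X Y \<longleftrightarrow> near0 (\<lambda>u1 u2 x e.
      fst X u1 u2 x e = fst Y u1 u2 x e \<and>
      fst (snd X) u1 u2 x e = fst (snd Y) u1 u2 x e \<and>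
      snd (snd X) u1 u2 x e = snd (snd Y) u1 u2 x e)"

definition zero_vf :: vfield where
  "zero_vf = ((\<lambda>u1 u2 x e. 0), (\<lambda>u1 u2 x e. 0), (\<lambda>u1 u2 x e. 0))"

definition chi_fun :: "(complex \<Rightarrow> complex \<Rightarrow> complex) \<Rightarrow> (complex \<Rightarrow> complex \<Rightarrow> complex)
    \<Rightarrow> complex \<Rightarrow> complex \<Rightarrow> complex \<Rightarrow> complex" where
  "chi_fun chi0 chi1 h x e = chi0 h e + x * chi1 h e"

definition Z_G :: "(complex \<Rightarrow> complex \<Rightarrow> complex) \<Rightarrow> (complex \<Rightarrow> complex \<Rightarrow> complex) \<Rightarrow> vfield" where
  "Z_G chi0 chi1 =
     ((\<lambda>u1 u2 x e. chi_fun chi0 chi1 (u1 * u2) x e * u1),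
      (\<lambda>u1 u2 x e. - chi_fun chi0 chi1 (u1 * u2) x e * u2),
      (\<lambda>u1 u2 x e. x * (x - e)))"

text \<open>Coefficients of the Lie derivative L_X(du1\<and>du2) in (u,x)-space
  (Cartan: L_X \<omega> = d(\<iota>_X \<omega>) = d(A du2 - B du1) for X = A\<partial>u1 + B\<partial>u2 + C\<partial>x):
  the du1\<and>du2, dx\<and>du1 and dx\<and>du2 coefficients are
  \<partial>u1 A + \<partial>u2 B, -\<partial>x B, \<partial>x A.\<close>
definition lie_area_vanishes :: "vfield \<Rightarrow> bool" where
  "lie_area_vanishes X \<longleftrightarrow> near0 (\<lambda>u1 u2 x e.
      d_u1 (fst X) u1 u2 x e + d_u2 (fst (snd X)) u1 u2 x e = 0 \<and>
      - d_x (fst (snd X)) u1 u2 x e = 0 \<and>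
      d_x (fst X) u1 u2 x e = 0)"

definition vert_sympl_sym ::
  "(complex \<Rightarrow> complex \<Rightarrow> complex) \<Rightarrow> (complex \<Rightarrow> complex \<Rightarrow> complex) \<Rightarrow> vfield \<Rightarrow> bool" where
  "vert_sympl_sym chi0 chi1 X \<longleftrightarrow>
     analytic0_4 (fst X) \<and> analytic0_4 (fst (snd X)) \<and> analytic0_4 (snd (snd X)) \<and>
     near0 (\<lambda>u1 u2 x e. snd (snd X) u1 u2 x e = 0) \<and>
     lie_area_vanishes X \<and>
     germ_eq (lie_bracket X (Z_G chi0 chi1)) zero_vf"

definition ham_vf :: "(complex \<Rightarrow> complex \<Rightarrow> complex) \<Rightarrow> vfield" where
  "ham_vf a = ((\<lambda>u1 u2 x e. a (u1 * u2) e * u1), (\<lambda>u1 u2 x e. - a (u1 * u2) e * u2),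
               (\<lambda>u1 u2 x e. 0))"

end

theory Submission
  imports Defs "HOL-Complex_Analysis.Cauchy_Integral_Formula"
begin

text \<open>
  Write a vertical symmetry as \<open>X = A \<partial>\<^sub>u\<^sub>1 + B \<partial>\<^sub>u\<^sub>2\<close>. Area preservation makes \<open>A, B\<close>
  independent of \<open>x\<close>, and at \<open>x = 0\<close> the \<open>u\<close>-components of \<open>[X, Z\<^sub>G\<^sub>,\<^sub>\<epsilon>] = 0\<close> become a
  linear ODE along the orbits \<open>s \<mapsto> (e\<^sup>i\<^sup>s u\<^sub>1, e\<^sup>-\<^sup>i\<^sup>s u\<^sub>2)\<close> of the rotation, on which
  \<open>u\<^sub>1u\<^sub>2\<close> and hence \<open>\<chi>\<close> are constant. Dividing by \<open>\<chi> \<noteq> 0\<close> and using that the orbits are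
  \<open>2\<pi>\<close>-periodic gives the Euler equations \<open>(u\<^sub>1\<partial>\<^sub>1 - u\<^sub>2\<partial>\<^sub>2) A = A\<close> and
  \<open>(u\<^sub>1\<partial>\<^sub>1 - u\<^sub>2\<partial>\<^sub>2) B = -B\<close>. So \<open>A\<close> and \<open>B\<close> have rotation weights \<open>1\<close> and \<open>-1\<close>, and
  comparing power series coefficients yields \<open>A = a(u\<^sub>1u\<^sub>2, \<epsilon>) u\<^sub>1\<close>, \<open>B = b(u\<^sub>1u\<^sub>2, \<epsilon>) u\<^sub>2\<close>.
  Area preservation says \<open>(h (a + b))' = 0\<close> in \<open>h = u\<^sub>1u\<^sub>2\<close>, hence \<open>b = -a\<close>. Conversely, fields
  \<open>a(u\<^sub>1u\<^sub>2, \<epsilon>)(u\<^sub>1\<partial>\<^sub>u\<^sub>1 - u\<^sub>2\<partial>\<^sub>u\<^sub>2)\<close> are analytic and area preserving, and a direct computation shows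
  that they commute with \<open>Z\<^sub>G\<^sub>,\<^sub>\<epsilon>\<close> and with each other.
\<close>

lemma linear_times_power_bounded:
  fixes \<rho> \<rho>' :: real
  assumes "0 < \<rho>" "\<rho> < \<rho>'"
  shows "\<exists>K. \<forall>n. real n * \<rho> ^ n \<le> K * \<rho>' ^ n"
proof -
  have "norm (\<rho> / \<rho>') < 1" using assms by auto
  from powser_times_n_limit_0[OF this] have "convergent (\<lambda>n. of_nat n * (\<rho> / \<rho>') ^ n)"
    by (auto simp: convergent_def)
  then have "Bseq (\<lambda>n. of_nat n * (\<rho> / \<rho>') ^ n)" by (rule convergent_imp_Bseq)
  then obtain B where B: "\<And>n. norm (of_nat n * (\<rho> / \<rho>') ^ n :: real) \<le> B"
    by (auto simp: Bseq_def)
  show ?thesis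
  proof (intro exI allI)
    fix n
    have "real n * (\<rho> / \<rho>') ^ n * \<rho>' ^ n \<le> B * \<rho>' ^ n"
      using B[of n] assms by (intro mult_right_mono) auto
    then show "real n * \<rho> ^ n \<le> B * \<rho>' ^ n"
      using assms by (simp add: power_divide)
  qed
qed

lemma has_field_derivative_infsum:
  fixes T T' :: "'i::countable \<Rightarrow> complex \<Rightarrow> complex" and M :: "'i \<Rightarrow> real"
  assumes inf: "infinite (UNIV::'i set)" and S: "open S" "convex S" "x \<in> S"
    and D: "\<And>n t. t \<in> S \<Longrightarrow> (T n has_field_derivative T' n t) (at t)"
    and B: "\<And>n t. t \<in> S \<Longrightarrow> norm (T' n t) \<le> M n"
    and M: "M summable_on UNIV"
    and sm: "\<And>t. t \<in> S \<Longrightarrow> (\<lambda>n. T n t) summable_on UNIV"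
  shows "((\<lambda>t. \<Sum>\<^sub>\<infinity>n. T n t) has_field_derivative (\<Sum>\<^sub>\<infinity>n. T' n x)) (at x)"
proof -
  define g where "g = from_nat_into (UNIV::'i set)"
  have bij: "bij_betw g UNIV UNIV" unfolding g_def
    by (rule bij_betw_from_nat_into) (auto simp: inf)
  have infsum_as_suminf: "(\<Sum>\<^sub>\<infinity>n. F n) = (\<Sum>n. F (g n))" if "F summable_on UNIV" for F :: "'i \<Rightarrow> complex"
  proof -
    have "(\<lambda>n. F (g n)) summable_on UNIV"
      using that summable_on_reindex_bij_betw[OF bij, of F] by simp
    then have "(\<lambda>n. F (g n)) sums (\<Sum>\<^sub>\<infinity>n. F (g n))"
      by (auto intro: has_sum_imp_sums)
    then show ?thesis using infsum_reindex_bij_betw[OF bij, of F] by (simp add: sums_iff)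
  qed
  have "(\<lambda>n. M (g n)) summable_on UNIV"
    using M summable_on_reindex_bij_betw[OF bij, of M] by simp
  then have Mg: "summable (\<lambda>n. M (g n))" by (rule summable_on_imp_summable)
  have unif: "uniformly_convergent_on S (\<lambda>n x. \<Sum>i<n. T' (g i) x)"
    unfolding uniformly_convergent_on_def
    by (rule exI, rule Weierstrass_m_test[OF _ Mg]) (use B in auto)
  define f where "f n = T (g n)" for n
  have "(\<lambda>n. T (g n) x) summable_on UNIV"
    using sm[OF S(3)] summable_on_reindex_bij_betw[OF bij, of "\<lambda>n. T n x"] by simp
  then have smx: "summable (\<lambda>n. f n x)" unfolding f_def by (rule summable_on_imp_summable)
  have Dw: "\<And>n t. t \<in> S \<Longrightarrow> (f n has_field_derivative T' (g n) t) (at t within S)"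
    unfolding f_def using D by (auto intro: has_field_derivative_at_within)
  have "x \<in> interior S" using S by (simp add: interior_open)
  then have R: "((\<lambda>x. \<Sum>n. T (g n) x) has_field_derivative (\<Sum>n. T' (g n) x)) (at x)"
    using has_field_derivative_series'(2)[OF S(2) Dw unif S(3) smx] by (simp add: f_def)
  have "(\<lambda>n. norm (T' n x)) summable_on UNIV"
    by (rule summable_on_comparison_test[OF M]) (use B[OF S(3)] in auto)
  then have eq': "(\<Sum>\<^sub>\<infinity>n. T' n x) = (\<Sum>n. T' (g n) x)"
    by (rule infsum_as_suminf[OF abs_summable_summable])
  have eq: "(\<Sum>\<^sub>\<infinity>n. T n t) = (\<Sum>n. T (g n) t)" if "t \<in> S" for t
    using infsum_as_suminf[OF sm[OF that]] .
  show ?thesis unfolding eq'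
    using has_field_derivative_transform_within_open[OF R S(1) S(3), of "\<lambda>t. \<Sum>\<^sub>\<infinity>n. T n t"]
    eq by simp
qed

lemma has_field_derivative_powser_slice:
  fixes c w :: "'i::countable \<Rightarrow> complex" and p :: "'i \<Rightarrow> nat"
  assumes inf: "infinite (UNIV::'i set)" and t: "norm t < \<rho>"
    and f: "\<And>s. norm s < \<rho> \<Longrightarrow> ((\<lambda>n. c n * s ^ p n * w n) has_sum f s) UNIV"
    and sm: "(\<lambda>n. norm (c n * w n) * \<rho> ^ p n) summable_on UNIV"
  shows "(f has_field_derivative (\<Sum>\<^sub>\<infinity>n. c n * (of_nat (p n) * t ^ (p n - 1)) * w n)) (at t)"
    and "(\<lambda>n. c n * (of_nat (p n) * t ^ (p n - 1)) * w n) summable_on UNIV"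
proof -
  define \<rho>' where "\<rho>' = (norm t + \<rho>) / 2"
  have \<rho>': "0 < \<rho>'" "\<rho>' < \<rho>" "norm t < \<rho>'"
    unfolding \<rho>'_def using t norm_ge_zero[of t] by argo+
  obtain K where K: "\<And>n. real n * \<rho>' ^ n \<le> K * \<rho> ^ n"
    using linear_times_power_bounded[OF \<rho>'(1,2)] by blast
  define M where "M n = K / \<rho>' * (norm (c n * w n) * \<rho> ^ p n)" for n
  have M: "M summable_on UNIV" unfolding M_def using sm by (rule summable_on_cmult_right)
  have Bd: "norm (c n * (of_nat (p n) * s ^ (p n - 1)) * w n) \<le> M n" if "s \<in> ball 0 \<rho>'" for n s
  proof -
    have "real (p n) * \<rho>' ^ (p n - 1) \<le> K / \<rho>' * \<rho> ^ p n"
    proof (cases "p n")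
      case (Suc m)
      then show ?thesis using K[of "p n"] \<rho>'(1) by (simp add: field_simps)
    qed (use K[of 0] \<rho>' in simp)
    moreover have "real (p n) * norm s ^ (p n - 1) \<le> real (p n) * \<rho>' ^ (p n - 1)"
      using that by (intro mult_left_mono power_mono) auto
    ultimately have "norm (c n * w n) * (real (p n) * norm s ^ (p n - 1))
        \<le> norm (c n * w n) * (K / \<rho>' * \<rho> ^ p n)"
      by (intro mult_left_mono) auto
    then show ?thesis by (simp add: M_def norm_mult norm_power mult_ac)
  qed
  have D: "((\<lambda>s. c n * s ^ p n * w n) has_field_derivative c n * (of_nat (p n) * s ^ (p n - 1)) * w n) (at s)"
    for n s
    by (auto intro!: derivative_eq_intros)
  have abs_sm: "(\<lambda>n. norm (c n * s ^ p n * w n)) summable_on UNIV" if "norm s \<le> \<rho>" for s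
  proof (rule summable_on_comparison_test[OF sm])
    fix n
    have "norm (c n * w n) * norm s ^ p n \<le> norm (c n * w n) * \<rho> ^ p n"
      using that by (intro mult_left_mono power_mono) auto
    then show "norm (c n * s ^ p n * w n) \<le> norm (c n * w n) * \<rho> ^ p n"
      by (simp add: norm_mult norm_power mult_ac)
  qed auto
  have "((\<lambda>s. \<Sum>\<^sub>\<infinity>n. c n * s ^ p n * w n) has_field_derivative
          (\<Sum>\<^sub>\<infinity>n. c n * (of_nat (p n) * t ^ (p n - 1)) * w n)) (at t)"
    by (rule has_field_derivative_infsum[OF inf open_ball[of 0 \<rho>'] convex_ball[of 0 \<rho>'] _ D Bd M])
      (use \<rho>' abs_summable_summable[OF abs_sm] in auto)
  moreover have "(\<Sum>\<^sub>\<infinity>n. c n * s ^ p n * w n) = f s" if "s \<in> ball 0 \<rho>'" for s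
    using f[of s] that \<rho>' by (simp add: infsumI)
  ultimately show "(f has_field_derivative (\<Sum>\<^sub>\<infinity>n. c n * (of_nat (p n) * t ^ (p n - 1)) * w n)) (at t)"
    using has_field_derivative_transform_within_open[OF _ open_ball, of _ _ t 0 \<rho>' f] \<rho>' by simp
  have "(\<lambda>n. norm (c n * (of_nat (p n) * t ^ (p n - 1)) * w n)) summable_on UNIV"
    by (rule summable_on_comparison_test[OF M]) (use Bd[of t] \<rho>' in auto)
  then show "(\<lambda>n. c n * (of_nat (p n) * t ^ (p n - 1)) * w n) summable_on UNIV"
    by (rule abs_summable_summable)
qed

lemma powser_has_sum_0_imp_coeff_0:
  fixes a :: "nat \<Rightarrow> complex"
  assumes r: "0 < r" and z: "\<And>x. norm x < r \<Longrightarrow> ((\<lambda>n. a n * x ^ n) has_sum 0) UNIV"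
  shows "a m = 0"
proof (rule ccontr)
  assume am: "a m \<noteq> 0"
  have sm: "\<And>x. norm (x - 0) < r \<Longrightarrow> (\<lambda>n. a n * (x - 0) ^ n) sums ((\<lambda>_. 0) x)"
    using z by (auto intro: has_sum_imp_sums)
  show False
  proof (cases "m = 0")
    case True
    from sm[of 0] r have "(\<lambda>n. a n * 0 ^ n) sums 0" by simp
    then show False using am True by (simp add: sums_iff)
  next
    case False
    show False
    proof (rule powser_0_nonzero[OF r sm _ am])
      fix s :: real
      assume "0 < s" and "\<And>z::complex. z \<in> cball 0 s - {0} \<Longrightarrow> (\<lambda>_. 0::complex) z \<noteq> 0"
      then show False by (metis (mono_tags) DiffI dual_order.refl mem_cball_0 norm_of_real
          abs_of_pos of_real_eq_0_iff order_less_irrefl singletonD)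
    qed (use False in auto)
  qed
qed

lemma has_sum_diff:
  fixes f g :: "'a \<Rightarrow> complex"
  assumes "(f has_sum a) A" and "(g has_sum b) A"
  shows "((\<lambda>x. f x - g x) has_sum (a - b)) A"
  using has_sum_add[OF assms(1) has_sum_uminusI[OF assms(2)]] by simp

lemma has_sum_0_imp_coeff_slice_0:
  fixes d :: "nat \<Rightarrow> 'j \<Rightarrow> complex" and g :: "'j \<Rightarrow> complex"
  assumes r: "0 < r"
    and z: "\<And>z. norm z < r \<Longrightarrow> ((\<lambda>(i,m). d i m * z ^ i * g m) has_sum 0) UNIV"
  shows "((\<lambda>m. d i m * g m) has_sum 0) UNIV"
proof -
  define z0 :: complex where "z0 = of_real (r/2)"
  have z0: "norm z0 < r" "z0 \<noteq> 0" using r by (auto simp: z0_def)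
  have inner: "(\<lambda>m. d k m * g m) summable_on UNIV" for k
  proof -
    have "(\<lambda>(i,m). d i m * z0 ^ i * g m) summable_on UNIV"
      using z[OF z0(1)] unfolding summable_on_def by blast
    then have "(\<lambda>m. d k m * z0 ^ k * g m) summable_on UNIV"
      using summable_on_SigmaD1[of "\<lambda>i m. d i m * z0 ^ i * g m" UNIV "\<lambda>_. UNIV"] by simp
    then have "(\<lambda>m. z0 ^ k * (d k m * g m)) summable_on UNIV" by (simp add: mult_ac)
    then show ?thesis using summable_on_cmult_right' z0(2) by (metis power_not_zero)
  qed
  define S where "S k = (\<Sum>\<^sub>\<infinity>m. d k m * g m)" for k
  have "((\<lambda>k. S k * z ^ k) has_sum 0) UNIV" if "norm z < r" for z
  proof (rule has_sum_Sigma'[where f="\<lambda>(i,m). d i m * z ^ i * g m" and A=UNIV and B="\<lambda>_. UNIV"])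
    show "((\<lambda>(i, m). d i m * z ^ i * g m) has_sum 0) (UNIV \<times> UNIV)"
      using z[OF that] by simp
    fix k :: nat
    have "((\<lambda>m. d k m * g m) has_sum S k) UNIV" using inner[of k] by (simp add: S_def)
    then have "((\<lambda>m. d k m * g m * z ^ k) has_sum S k * z ^ k) UNIV" by (rule has_sum_cmult_left)
    then show "((\<lambda>m. case (k, m) of (i, m) \<Rightarrow> d i m * z ^ i * g m) has_sum S k * z ^ k) UNIV"
      by (simp add: mult_ac)
  qed
  then have "S i = 0" using powser_has_sum_0_imp_coeff_0[OF r] by blast
  then show ?thesis using inner[of i] by (metis S_def has_sum_infsum)
qed

lemma norm_mult_less:
  fixes p1 p2 :: complex
  assumes "norm p1 < \<rho>" "norm p2 < \<rho>" "\<rho> \<le> 1"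
  shows "norm (p1 * p2) < \<rho>"
proof -
  have "norm p1 * norm p2 \<le> norm p1" using assms by (intro mult_left_le) auto
  then show ?thesis using assms by (simp add: norm_mult)
qed

lemma zero_deriv_imp_eq_on_ball:
  assumes "\<And>t. norm t < R \<Longrightarrow> (g has_field_derivative 0) (at t)" "norm t1 < R" "norm t2 < R"
  shows "g t1 = g (t2::complex)"
proof -
  have "\<And>t. t \<in> ball 0 R \<Longrightarrow> (g has_field_derivative 0) (at t within ball 0 R)"
    using assms(1) by (auto intro: has_field_derivative_at_within)
  from has_field_derivative_zero_constant[OF convex_ball this] assms(2,3) show ?thesis by auto
qed

text \<open>\<open>a + h a' + b + h b' = (h (a + b))'\<close>, so \<open>h (a + b)\<close> is constant, i.e. zero.\<close>
lemma sum_eq_0_of_euler_divergence: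
  fixes a b a' b' :: "complex \<Rightarrow> complex"
  assumes a: "\<And>h. norm h < \<rho> \<Longrightarrow> (a has_field_derivative a' h) (at h)"
    and b: "\<And>h. norm h < \<rho> \<Longrightarrow> (b has_field_derivative b' h) (at h)"
    and div: "\<And>h. norm h < \<rho> \<Longrightarrow> a h + h * a' h + b h + h * b' h = 0"
    and h: "norm h < \<rho>"
  shows "a h + b h = 0"
proof (cases "h = 0")
  case True
  with div[OF h] show ?thesis by simp
next
  case False
  have "((\<lambda>s. s * (a s + b s)) has_field_derivative 0) (at s)" if "norm s < \<rho>" for s
    using DERIV_mult[OF DERIV_ident DERIV_add[OF a[OF that] b[OF that]]] div[OF that]
    by (simp add: algebra_simps)
  moreover have "norm (0::complex) < \<rho>" using le_less_trans[OF norm_ge_zero h] by simp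
  ultimately have "h * (a h + b h) = 0 * (a 0 + b 0)" by (rule zero_deriv_imp_eq_on_ball[OF _ h])
  with False show ?thesis by simp
qed

section \<open>Functions on a strip\<close>

lemma open_strip: "open {s. \<bar>Im s\<bar> < 1}"
  and convex_strip: "convex {s. \<bar>Im s\<bar> < 1}"
proof -
  have strip: "{s. \<bar>Im s\<bar> < 1} = {s. Im s < 1} \<inter> {s. Im s > -1}" by (auto simp: abs_less_iff)
  show "open {s. \<bar>Im s\<bar> < 1}"
    unfolding strip by (intro open_Int open_halfspace_Im_lt open_halfspace_Im_gt)
  show "convex {s. \<bar>Im s\<bar> < 1}"
    unfolding strip by (intro convex_Int convex_halfspace_Im_lt convex_halfspace_Im_gt)
qed

lemma zero_deriv_imp_eq_on_strip:
  assumes "\<And>t. \<bar>Im t\<bar> < 1 \<Longrightarrow> (g has_field_derivative 0) (at t)" "\<bar>Im t1\<bar> < 1" "\<bar>Im t2\<bar> < 1"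
  shows "g t1 = g t2"
proof -
  have "\<And>t. t \<in> {s. \<bar>Im s\<bar> < 1} \<Longrightarrow> (g has_field_derivative 0) (at t within {s. \<bar>Im s\<bar> < 1})"
    using assms(1) by (auto intro: has_field_derivative_at_within)
  from has_field_derivative_zero_constant[OF convex_strip this] assms(2,3) show ?thesis by auto
qed

lemma periodic_imp_deriv_0:
  assumes D: "\<And>s. \<bar>Im s\<bar> < 1 \<Longrightarrow> (\<alpha> has_field_derivative \<kappa>) (at s)"
    and periodic: "\<alpha> (2 * complex_of_real pi) = \<alpha> 0"
  shows "\<kappa> = 0"
proof -
  have "((\<lambda>s. \<alpha> s - \<kappa> * s) has_field_derivative 0) (at s)" if "\<bar>Im s\<bar> < 1" for s
    using DERIV_diff[OF D[OF that] DERIV_cmult_Id[of \<kappa> s]] by simp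
  from zero_deriv_imp_eq_on_strip[OF this, of "2 * complex_of_real pi" 0] periodic show ?thesis
    by simp
qed

lemma exp_ii_2pi [simp]:
  "exp (\<i> * (2 * complex_of_real pi)) = 1" "exp (- (\<i> * (2 * complex_of_real pi))) = 1"
  by (simp_all add: exp_minus mult.commute mult.left_commute)

lemma norm_exp_ii_mult_le:
  "norm (exp (\<i> * s * of_int k)) \<le> exp (\<bar>Im s\<bar>) ^ nat \<bar>k\<bar>"
proof -
  have "- (Im s * of_int k) \<le> of_nat (nat \<bar>k\<bar>) * \<bar>Im s\<bar>"
    by (metis abs_ge_minus_self abs_mult mult.commute of_int_abs of_nat_nat abs_ge_zero)
  then have "norm (exp (\<i> * s * of_int k)) \<le> exp (of_nat (nat \<bar>k\<bar>) * \<bar>Im s\<bar>)"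
    by simp
  then show ?thesis by (simp only: exp_of_nat_mult)
qed

lemma norm_exp_strip_less_3:
  assumes "\<bar>Im s\<bar> < 1"
  shows "norm (exp (\<i> * s)) < 3" "norm (exp (- (\<i> * s))) < 3"
proof -
  have "exp (\<bar>Im s\<bar>) < exp 1" using assms by simp
  then have "exp (\<bar>Im s\<bar>) < 3" using e_less_272 by linarith
  moreover have "exp (- Im s) \<le> exp (\<bar>Im s\<bar>)" "exp (Im s) \<le> exp (\<bar>Im s\<bar>)" by simp_all
  moreover have "norm (exp (\<i> * s)) = exp (- Im s)" "norm (exp (- (\<i> * s))) = exp (Im s)" by simp_all
  ultimately show "norm (exp (\<i> * s)) < 3" "norm (exp (- (\<i> * s))) < 3" by linarith+
qed

lemma norm_rotation_le:
  assumes "\<bar>Im s\<bar> < 1"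
  shows "norm (exp (\<i> * s) * u) \<le> 3 * norm u" "norm (exp (- (\<i> * s)) * u) \<le> 3 * norm u"
  unfolding norm_mult using norm_exp_strip_less_3[OF assms] by (intro mult_right_mono; simp)+

text \<open>On the strip \<open>\<bar>exp (\<i> s k)\<bar> \<le> e\<^sup>\<bar>k\<bar> < 3\<^sup>\<bar>k\<bar>\<close>, whence the weights \<open>3\<^sup>\<bar>q n\<bar>\<close>.\<close>
lemma has_field_derivative_fourier_sum:
  fixes c :: "'i::countable \<Rightarrow> complex" and q :: "'i \<Rightarrow> int"
  assumes inf: "infinite (UNIV::'i set)" and t: "\<bar>Im t\<bar> < 1"
    and sm: "(\<lambda>n. norm (c n) * 3 ^ nat \<bar>q n\<bar>) summable_on UNIV"
  shows "((\<lambda>s. \<Sum>\<^sub>\<infinity>n. c n * exp (\<i> * s * of_int (q n))) has_field_derivative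
            (\<Sum>\<^sub>\<infinity>n. c n * (\<i> * of_int (q n) * exp (\<i> * t * of_int (q n))))) (at t)"
proof -
  define S where "S = {s. \<bar>Im s\<bar> < 1}"
  have e3: "exp 1 < (3::real)" using e_less_272 by linarith
  obtain K where K: "\<And>n. real n * exp 1 ^ n \<le> K * 3 ^ n"
    using linear_times_power_bounded[of "exp 1" 3] e3 by auto
  have ex: "norm (exp (\<i> * s * of_int k)) \<le> exp 1 ^ nat \<bar>k\<bar>" if "s \<in> S" for s k
    using norm_exp_ii_mult_le[of s k] that
    by (smt (verit, best) S_def exp_gt_zero exp_le_cancel_iff mem_Collect_eq power_mono)
  define M where "M n = K * (norm (c n) * 3 ^ nat \<bar>q n\<bar>)" for n
  have M: "M summable_on UNIV" unfolding M_def using sm by (rule summable_on_cmult_right)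
  have Bd: "norm (c n * (\<i> * of_int (q n) * exp (\<i> * s * of_int (q n)))) \<le> M n" if "s \<in> S" for n s
  proof -
    have "norm (c n * (\<i> * of_int (q n) * exp (\<i> * s * of_int (q n))))
        = norm (c n) * (real (nat \<bar>q n\<bar>) * norm (exp (\<i> * s * of_int (q n))))"
      by (simp add: norm_mult)
    also have "\<dots> \<le> norm (c n) * (real (nat \<bar>q n\<bar>) * exp 1 ^ nat \<bar>q n\<bar>)"
      by (intro mult_left_mono ex that) auto
    also have "\<dots> \<le> norm (c n) * (K * 3 ^ nat \<bar>q n\<bar>)"
      by (intro mult_left_mono K) auto
    finally show ?thesis by (simp add: M_def mult_ac)
  qed
  have D: "((\<lambda>s. c n * exp (\<i> * s * of_int (q n))) has_field_derivative
      c n * (\<i> * of_int (q n) * exp (\<i> * s * of_int (q n)))) (at s)" for n s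
    by (auto intro!: derivative_eq_intros)
  have "(\<lambda>n. c n * exp (\<i> * s * of_int (q n))) summable_on UNIV" if "s \<in> S" for s
  proof (rule abs_summable_summable, rule summable_on_comparison_test[OF sm])
    fix n
    have "norm (c n * exp (\<i> * s * of_int (q n))) \<le> norm (c n) * exp 1 ^ nat \<bar>q n\<bar>"
      unfolding norm_mult by (intro mult_left_mono ex that) auto
    also have "\<dots> \<le> norm (c n) * 3 ^ nat \<bar>q n\<bar>"
      using e3 by (intro mult_left_mono power_mono) auto
    finally show "norm (c n * exp (\<i> * s * of_int (q n))) \<le> norm (c n) * 3 ^ nat \<bar>q n\<bar>" .
  qed auto
  then show ?thesis
    using has_field_derivative_infsum[OF inf open_strip convex_strip _ D Bd M] t by (simp add: S_def)
qed

text \<open>The ODE satisfied along the orbit \<open>(P\<^sub>1, P\<^sub>2) = (e\<^sup>i\<^sup>s u, e\<^sup>-\<^sup>i\<^sup>s v)\<close> by the components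
  \<open>a, b\<close> of a symmetry and their Euler derivatives \<open>D\<^sub>a, D\<^sub>b\<close>. The relations make
  \<open>\<psi> = a P\<^sub>2 + b P\<^sub>1\<close> constant and give \<open>e\<^sup>-\<^sup>i\<^sup>s a\<close> the constant slope \<open>i f' u \<psi> / f\<close>;
  \<open>2\<pi>\<close>-periodicity forces the slope, hence \<open>D\<^sub>a - a\<close>, to vanish, and likewise for \<open>b\<close>.\<close>
lemma orbit_euler_equations:
  fixes a b Da Db :: "complex \<Rightarrow> complex" and u v :: complex
  defines "P1 \<equiv> \<lambda>s. exp (\<i> * s) * u" and "P2 \<equiv> \<lambda>s. exp (- (\<i> * s)) * v"
  assumes da: "\<And>s. \<bar>Im s\<bar> < 1 \<Longrightarrow> (a has_field_derivative \<i> * Da s) (at s)"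
    and db: "\<And>s. \<bar>Im s\<bar> < 1 \<Longrightarrow> (b has_field_derivative \<i> * Db s) (at s)"
    and rel: "\<And>s. \<bar>Im s\<bar> < 1 \<Longrightarrow> f * (Da s - a s) = f' * P1 s * (a s * P2 s + b s * P1 s)"
      "\<And>s. \<bar>Im s\<bar> < 1 \<Longrightarrow> f * (Db s + b s) = - (f' * P2 s * (a s * P2 s + b s * P1 s))"
    and periodic: "a (2 * complex_of_real pi) = a 0" "b (2 * complex_of_real pi) = b 0"
    and nz: "f \<noteq> 0"
  shows "Da 0 = a 0" and "Db 0 = - b 0"
proof -
  define \<psi> where "\<psi> s = a s * P2 s + b s * P1 s" for s
  have "(\<psi> has_field_derivative 0) (at s)" if s: "\<bar>Im s\<bar> < 1" for s
  proof -
    have "(\<psi> has_field_derivative \<i> * (P2 s * (Da s - a s) + P1 s * (Db s + b s))) (at s)"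
      unfolding \<psi>_def[abs_def] P1_def P2_def
      by (rule derivative_eq_intros da[OF s] db[OF s] refl | simp add: algebra_simps)+
    moreover have "f * (P2 s * (Da s - a s) + P1 s * (Db s + b s))
        = P2 s * (f * (Da s - a s)) + P1 s * (f * (Db s + b s))"
      by (simp add: algebra_simps)
    then have "f * (P2 s * (Da s - a s) + P1 s * (Db s + b s)) = 0"
      unfolding rel[OF s] \<psi>_def by (simp add: algebra_simps)
    ultimately show ?thesis using nz by simp
  qed
  then have \<psi>: "\<psi> s = \<psi> 0" if "\<bar>Im s\<bar> < 1" for s
    using zero_deriv_imp_eq_on_strip[of \<psi> s 0] that by simp
  have exp_i: "((\<lambda>s. exp (\<i> * s)) has_field_derivative \<i> * exp (\<i> * s)) (at s)"
    and exp_mi: "((\<lambda>s. exp (- (\<i> * s))) has_field_derivative - \<i> * exp (- (\<i> * s))) (at s)" for s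
    by (auto intro!: derivative_eq_intros)
  have "((\<lambda>s. exp (- (\<i> * s)) * a s) has_field_derivative \<i> * f' * u * \<psi> 0 / f) (at s)"
    if s: "\<bar>Im s\<bar> < 1" for s
  proof -
    have "f * (- \<i> * exp (- (\<i> * s)) * a s + \<i> * Da s * exp (- (\<i> * s)))
        = \<i> * exp (- (\<i> * s)) * (f * (Da s - a s))"
      by (simp add: algebra_simps)
    also have "\<dots> = \<i> * f' * (exp (- (\<i> * s)) * P1 s) * \<psi> s"
      unfolding rel(1)[OF s] \<psi>_def by (simp add: algebra_simps)
    also have "exp (- (\<i> * s)) * P1 s = u" by (simp add: P1_def exp_minus field_simps)
    finally have val: "- \<i> * exp (- (\<i> * s)) * a s + \<i> * Da s * exp (- (\<i> * s)) = \<i> * f' * u * \<psi> 0 / f"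
      using \<psi>[OF s] nz by (simp add: field_simps)
    show ?thesis using DERIV_mult[OF exp_mi da[OF s], unfolded val] .
  qed
  from periodic_imp_deriv_0[OF this] have "f' * u * \<psi> 0 = 0" using nz periodic by simp
  then have "f * (Da 0 - a 0) = 0" using rel(1)[of 0] by (simp add: \<psi>_def P1_def mult_ac)
  then show "Da 0 = a 0" using nz by simp
  have "((\<lambda>s. exp (\<i> * s) * b s) has_field_derivative - (\<i> * f' * v * \<psi> 0 / f)) (at s)"
    if s: "\<bar>Im s\<bar> < 1" for s
  proof -
    have "f * (\<i> * exp (\<i> * s) * b s + \<i> * Db s * exp (\<i> * s))
        = \<i> * exp (\<i> * s) * (f * (Db s + b s))"
      by (simp add: algebra_simps)
    also have "\<dots> = - (\<i> * f' * (exp (\<i> * s) * P2 s) * \<psi> s)"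
      unfolding rel(2)[OF s] \<psi>_def by (simp add: algebra_simps)
    also have "exp (\<i> * s) * P2 s = v" by (simp add: P2_def exp_minus field_simps)
    finally have val: "\<i> * exp (\<i> * s) * b s + \<i> * Db s * exp (\<i> * s) = - (\<i> * f' * v * \<psi> 0 / f)"
      using \<psi>[OF s] nz by (simp add: field_simps)
    show ?thesis using DERIV_mult[OF exp_i db[OF s], unfolded val] .
  qed
  from periodic_imp_deriv_0[OF this] have "f' * v * \<psi> 0 = 0" using nz periodic by simp
  then have "f * (Db 0 + b 0) = 0" using rel(2)[of 0] by (simp add: \<psi>_def P2_def mult_ac)
  then show "Db 0 = - b 0" using nz by (simp add: eq_neg_iff_add_eq_0)
qed

section \<open>Power series in several variables\<close>

abbreviation powser4_on :: "real \<Rightarrow> (nat \<Rightarrow> nat \<Rightarrow> nat \<Rightarrow> nat \<Rightarrow> complex) \<Rightarrow> fn4 \<Rightarrow> bool" where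
  "powser4_on r c f \<equiv> (\<forall>z1 z2 z3 z4. norm z1 < r \<and> norm z2 < r \<and> norm z3 < r \<and> norm z4 < r \<longrightarrow>
       ((\<lambda>(i,j,k,l). c i j k l * z1 ^ i * z2 ^ j * z3 ^ k * z4 ^ l) has_sum f z1 z2 z3 z4) UNIV)"

abbreviation powser2_on ::
    "real \<Rightarrow> (nat \<Rightarrow> nat \<Rightarrow> complex) \<Rightarrow> (complex \<Rightarrow> complex \<Rightarrow> complex) \<Rightarrow> bool" where
  "powser2_on r c f \<equiv> (\<forall>z1 z2. norm z1 < r \<and> norm z2 < r \<longrightarrow>
       ((\<lambda>(i,j). c i j * z1 ^ i * z2 ^ j) has_sum f z1 z2) UNIV)"

lemma powser4_coeffs_eq_0:
  fixes d :: "nat \<Rightarrow> nat \<Rightarrow> nat \<Rightarrow> nat \<Rightarrow> complex"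
  assumes r: "0 < r" and "powser4_on r d (\<lambda>z1 z2 z3 z4. 0)"
  shows "d i j k l = 0"
proof -
  have z: "((\<lambda>(i,j,k,l). d i j k l * z1 ^ i * z2 ^ j * z3 ^ k * z4 ^ l) has_sum 0) UNIV"
    if "norm z1 < r" "norm z2 < r" "norm z3 < r" "norm z4 < r" for z1 z2 z3 z4
    using assms(2) that by auto
  have s1: "((\<lambda>(j,k,l). d i j k l * z2 ^ j * z3 ^ k * z4 ^ l) has_sum 0) UNIV"
    if "norm z2 < r" "norm z3 < r" "norm z4 < r" for z2 z3 z4
    using has_sum_0_imp_coeff_slice_0[OF r, of "\<lambda>i (j,k,l). d i j k l" "\<lambda>(j,k,l). z2 ^ j * z3 ^ k * z4 ^ l" i]
      z[OF _ that]
    by (simp add: case_prod_unfold mult_ac)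
  have s2: "((\<lambda>(k,l). d i j k l * z3 ^ k * z4 ^ l) has_sum 0) UNIV"
    if "norm z3 < r" "norm z4 < r" for z3 z4
    using has_sum_0_imp_coeff_slice_0[OF r, of "\<lambda>j (k,l). d i j k l" "\<lambda>(k,l). z3 ^ k * z4 ^ l" j]
      s1[OF _ that]
    by (simp add: case_prod_unfold mult_ac)
  have "((\<lambda>l. d i j k l * z4 ^ l) has_sum 0) UNIV" if "norm z4 < r" for z4
    using has_sum_0_imp_coeff_slice_0[OF r, of "\<lambda>k l. d i j k l" "\<lambda>l. z4 ^ l" k] s2[OF _ that]
    by (simp add: case_prod_unfold mult_ac)
  then show ?thesis by (rule powser_has_sum_0_imp_coeff_0[OF r])
qed

lemma powser4_coeffs_unique:
  assumes "0 < r" "powser4_on r c F" "powser4_on r d F"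
  shows "c i j k l = d i j k l"
proof -
  have "powser4_on r (\<lambda>i j k l. c i j k l - d i j k l) (\<lambda>z1 z2 z3 z4. 0)"
  proof (intro allI impI)
    fix z1 z2 z3 z4 :: complex assume "norm z1 < r \<and> norm z2 < r \<and> norm z3 < r \<and> norm z4 < r"
    then have "((\<lambda>n. (\<lambda>(i,j,k,l). c i j k l * z1 ^ i * z2 ^ j * z3 ^ k * z4 ^ l) n
        - (\<lambda>(i,j,k,l). d i j k l * z1 ^ i * z2 ^ j * z3 ^ k * z4 ^ l) n) has_sum F z1 z2 z3 z4 - F z1 z2 z3 z4) UNIV"
      using assms(2,3) by (intro has_sum_diff) auto
    then show "((\<lambda>(i,j,k,l). (c i j k l - d i j k l) * z1 ^ i * z2 ^ j * z3 ^ k * z4 ^ l) has_sum 0) UNIV"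
      by (simp add: case_prod_unfold algebra_simps)
  qed
  from powser4_coeffs_eq_0[OF assms(1) this] show ?thesis by simp
qed

lemma powser4_abs_summable:
  assumes "powser4_on r c f"
    and "0 \<le> a1" "a1 < r" "0 \<le> a2" "a2 < r" "0 \<le> a3" "a3 < r" "0 \<le> a4" "a4 < r"
  shows "(\<lambda>(i,j,k,l). norm (c i j k l) * a1 ^ i * a2 ^ j * a3 ^ k * a4 ^ l) summable_on UNIV"
proof -
  have "((\<lambda>(i,j,k,l). c i j k l * of_real a1 ^ i * of_real a2 ^ j * of_real a3 ^ k * of_real a4 ^ l)
      has_sum f a1 a2 a3 a4) UNIV"
    using assms by auto
  then have "(\<lambda>n. norm ((\<lambda>(i,j,k,l). c i j k l * of_real a1 ^ i * of_real a2 ^ j * of_real a3 ^ k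
      * of_real a4 ^ l :: complex) n)) summable_on UNIV"
    using summable_on_iff_abs_summable_on_complex unfolding summable_on_def by blast
  then show ?thesis
    using assms by (simp add: case_prod_unfold norm_mult norm_power)
qed

lemma powser2_abs_summable:
  assumes "powser2_on r c f" and "0 \<le> a1" "a1 < r" "0 \<le> a2" "a2 < r"
  shows "(\<lambda>(i,j). norm (c i j) * a1 ^ i * a2 ^ j) summable_on UNIV"
proof -
  have "((\<lambda>(i,j). c i j * of_real a1 ^ i * of_real a2 ^ j) has_sum f a1 a2) UNIV"
    using assms by auto
  then have "(\<lambda>n. norm ((\<lambda>(i,j). c i j * of_real a1 ^ i * of_real a2 ^ j :: complex) n))
      summable_on UNIV"
    using summable_on_iff_abs_summable_on_complex unfolding summable_on_def by blast
  then show ?thesis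
    using assms by (simp add: case_prod_unfold norm_mult norm_power)
qed

lemma powser4_d_u1:
  assumes F: "powser4_on r c F" and z: "norm z1 < r" "norm z2 < r" "norm z3 < r" "norm z4 < r"
  shows "((\<lambda>t. F t z2 z3 z4) has_field_derivative d_u1 F z1 z2 z3 z4) (at z1)"
    and "((\<lambda>(i,j,k,l). c i j k l * (of_nat i * z1 ^ (i - 1)) * (z2 ^ j * z3 ^ k * z4 ^ l))
          has_sum d_u1 F z1 z2 z3 z4) UNIV"
proof -
  define \<rho> where "\<rho> = (norm z1 + r) / 2"
  have \<rho>: "norm z1 < \<rho>" "\<rho> < r" "0 \<le> \<rho>"
    using z(1) norm_ge_zero[of z1] unfolding \<rho>_def by (auto simp del: norm_ge_zero)
  define C where "C = (\<lambda>(i,j,k,l). c i j k l)"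
  define p where "p = (\<lambda>(i::nat,j::nat,k::nat,l::nat). i)"
  define w where "w = (\<lambda>(i::nat,j,k,l). z2 ^ j * z3 ^ k * z4 ^ l)"
  have sums: "((\<lambda>n. C n * s ^ p n * w n) has_sum F s z2 z3 z4) UNIV" if "norm s < \<rho>" for s
    using F that \<rho> z by (auto simp: C_def p_def w_def case_prod_unfold mult_ac)
  have abs: "(\<lambda>n. norm (C n * w n) * \<rho> ^ p n) summable_on UNIV"
    using powser4_abs_summable[OF F, of \<rho> "norm z2" "norm z3" "norm z4"] \<rho> z
    by (simp add: C_def p_def w_def case_prod_unfold norm_mult norm_power mult_ac)
  have inf: "infinite (UNIV :: (nat \<times> nat \<times> nat \<times> nat) set)" by (simp add: finite_prod)
  note slice = has_field_derivative_powser_slice[OF inf \<rho>(1) sums abs]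
  have d: "d_u1 F z1 z2 z3 z4 = (\<Sum>\<^sub>\<infinity>n. C n * (of_nat (p n) * z1 ^ (p n - 1)) * w n)"
    unfolding d_u1_def by (rule DERIV_imp_deriv[OF slice(1)])
  show "((\<lambda>t. F t z2 z3 z4) has_field_derivative d_u1 F z1 z2 z3 z4) (at z1)"
    unfolding d by (rule slice(1))
  have "((\<lambda>n. C n * (of_nat (p n) * z1 ^ (p n - 1)) * w n) has_sum d_u1 F z1 z2 z3 z4) UNIV"
    unfolding d by (rule has_sum_infsum[OF slice(2)])
  then show "((\<lambda>(i,j,k,l). c i j k l * (of_nat i * z1 ^ (i - 1)) * (z2 ^ j * z3 ^ k * z4 ^ l))
      has_sum d_u1 F z1 z2 z3 z4) UNIV"
    by (simp add: C_def p_def w_def case_prod_unfold)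
qed

lemma has_sum_swap12:
  fixes f :: "nat \<Rightarrow> nat \<Rightarrow> nat \<Rightarrow> nat \<Rightarrow> complex"
  shows "((\<lambda>(i,j,k,l). f j i k l) has_sum s) UNIV \<longleftrightarrow> ((\<lambda>(i,j,k,l). f i j k l) has_sum s) UNIV"
proof -
  define sw where "sw = (\<lambda>(i::nat,j::nat,k::nat,l::nat). (j,i,k,l))"
  have "bij_betw sw UNIV UNIV"
    by (rule bij_betwI[where g=sw]) (auto simp: sw_def)
  from has_sum_reindex_bij_betw[OF this, of "\<lambda>(i,j,k,l). f i j k l" s] show ?thesis
    by (simp add: sw_def case_prod_unfold)
qed

lemma powser4_swap12:
  assumes "powser4_on r c F"
  shows "powser4_on r (\<lambda>i j k l. c j i k l) (\<lambda>u1 u2 x e. F u2 u1 x e)"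
proof (intro allI impI)
  fix z1 z2 z3 z4 :: complex
  assume "norm z1 < r \<and> norm z2 < r \<and> norm z3 < r \<and> norm z4 < r"
  then have "((\<lambda>(i,j,k,l). c i j k l * z2 ^ i * z1 ^ j * z3 ^ k * z4 ^ l) has_sum F z2 z1 z3 z4) UNIV"
    using assms by auto
  then show "((\<lambda>(i,j,k,l). c j i k l * z1 ^ i * z2 ^ j * z3 ^ k * z4 ^ l) has_sum F z2 z1 z3 z4) UNIV"
    using has_sum_swap12[of "\<lambda>i j k l. c i j k l * z2 ^ i * z1 ^ j * z3 ^ k * z4 ^ l"]
    by (simp add: mult_ac)
qed

lemma powser4_d_u2:
  assumes F: "powser4_on r c F" and z: "norm z1 < r" "norm z2 < r" "norm z3 < r" "norm z4 < r"
  shows "((\<lambda>t. F z1 t z3 z4) has_field_derivative d_u2 F z1 z2 z3 z4) (at z2)"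
    and "((\<lambda>(i,j,k,l). c i j k l * (of_nat j * z2 ^ (j - 1)) * (z1 ^ i * z3 ^ k * z4 ^ l))
          has_sum d_u2 F z1 z2 z3 z4) UNIV"
proof -
  have d: "d_u2 F z1 z2 z3 z4 = d_u1 (\<lambda>u1 u2 x e. F u2 u1 x e) z2 z1 z3 z4"
    by (simp add: d_u1_def d_u2_def)
  note swapped = powser4_d_u1[OF powser4_swap12[OF F] z(2,1,3,4), unfolded d[symmetric]]
  show "((\<lambda>t. F z1 t z3 z4) has_field_derivative d_u2 F z1 z2 z3 z4) (at z2)"
    using swapped(1) .
  show "((\<lambda>(i,j,k,l). c i j k l * (of_nat j * z2 ^ (j - 1)) * (z1 ^ i * z3 ^ k * z4 ^ l))
      has_sum d_u2 F z1 z2 z3 z4) UNIV"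
    using swapped(2) has_sum_swap12[of "\<lambda>i j k l. c i j k l * (of_nat j * z2 ^ (j - 1)) * (z1 ^ i * z3 ^ k * z4 ^ l)"]
    by simp
qed

lemma powser4_d_x:
  assumes F: "powser4_on r c F" and z: "norm z1 < r" "norm z2 < r" "norm z3 < r" "norm z4 < r"
  shows "((\<lambda>t. F z1 z2 t z4) has_field_derivative d_x F z1 z2 z3 z4) (at z3)"
proof -
  define \<rho> where "\<rho> = (norm z3 + r) / 2"
  have \<rho>: "norm z3 < \<rho>" "\<rho> < r" "0 \<le> \<rho>"
    using z(3) norm_ge_zero[of z3] unfolding \<rho>_def by (auto simp del: norm_ge_zero)
  define C where "C = (\<lambda>(i,j,k,l). c i j k l)"
  define p where "p = (\<lambda>(i::nat,j::nat,k::nat,l::nat). k)"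
  define w where "w = (\<lambda>(i,j,k::nat,l). z1 ^ i * z2 ^ j * z4 ^ l)"
  have sums: "((\<lambda>n. C n * s ^ p n * w n) has_sum F z1 z2 s z4) UNIV" if "norm s < \<rho>" for s
    using F that \<rho> z by (auto simp: C_def p_def w_def case_prod_unfold mult_ac)
  have abs: "(\<lambda>n. norm (C n * w n) * \<rho> ^ p n) summable_on UNIV"
    using powser4_abs_summable[OF F, of "norm z1" "norm z2" \<rho> "norm z4"] \<rho> z
    by (simp add: C_def p_def w_def case_prod_unfold norm_mult norm_power mult_ac)
  have inf: "infinite (UNIV :: (nat \<times> nat \<times> nat \<times> nat) set)" by (simp add: finite_prod)
  have D: "((\<lambda>s. F z1 z2 s z4) has_field_derivative
      (\<Sum>\<^sub>\<infinity>n. C n * (of_nat (p n) * z3 ^ (p n - 1)) * w n)) (at z3)"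
    by (rule has_field_derivative_powser_slice(1)[OF inf \<rho>(1) sums abs])
  show ?thesis unfolding d_x_def DERIV_imp_deriv[OF D] by (rule D)
qed

lemma powser2_deriv:
  assumes f: "powser2_on r c f" and z: "norm z1 < r" "norm z2 < r"
  shows "((\<lambda>t. f t z2) has_field_derivative deriv (\<lambda>t. f t z2) z1) (at z1)"
proof -
  define \<rho> where "\<rho> = (norm z1 + r) / 2"
  have \<rho>: "norm z1 < \<rho>" "\<rho> < r" "0 \<le> \<rho>"
    using z(1) norm_ge_zero[of z1] unfolding \<rho>_def by (auto simp del: norm_ge_zero)
  define C where "C = (\<lambda>(i,j). c i j)"
  define p where "p = (\<lambda>(i::nat,j::nat). i)"
  define w where "w = (\<lambda>(i::nat,j). z2 ^ j)"
  have sums: "((\<lambda>n. C n * s ^ p n * w n) has_sum f s z2) UNIV" if "norm s < \<rho>" for s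
    using f that \<rho> z by (auto simp: C_def p_def w_def case_prod_unfold mult_ac)
  have abs: "(\<lambda>n. norm (C n * w n) * \<rho> ^ p n) summable_on UNIV"
    using powser2_abs_summable[OF f, of \<rho> "norm z2"] \<rho> z
    by (simp add: C_def p_def w_def case_prod_unfold norm_mult norm_power mult_ac)
  have inf: "infinite (UNIV :: (nat \<times> nat) set)" by (simp add: finite_prod)
  have D: "((\<lambda>s. f s z2) has_field_derivative
      (\<Sum>\<^sub>\<infinity>n. C n * (of_nat (p n) * z1 ^ (p n - 1)) * w n)) (at z1)"
    by (rule has_field_derivative_powser_slice(1)[OF inf \<rho>(1) sums abs])
  show ?thesis unfolding DERIV_imp_deriv[OF D] by (rule D)
qed

lemma powser2_at_0:
  assumes "powser2_on r c f" and "0 < r"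
  shows "f 0 0 = c 0 0"
proof -
  have "((\<lambda>(i,j). c i j * 0 ^ i * 0 ^ j) has_sum f 0 0) UNIV" using assms by auto
  moreover have "((\<lambda>(i,j). c i j * (0::complex) ^ i * 0 ^ j) has_sum c 0 0) UNIV"
    by (rule has_sum_finite_neutralI[where B="{(0,0)}"]) (auto split: prod.splits)
  ultimately show ?thesis using has_sum_unique by blast
qed

text \<open>Off the constant term, \<open>\<bar>c\<^sub>i\<^sub>j h\<^sup>i e\<^sup>j\<bar> \<le> (\<delta>/\<rho>) \<bar>c\<^sub>i\<^sub>j\<bar> \<rho>\<^sup>i\<^sup>+\<^sup>j\<close> when \<open>\<bar>h\<bar>, \<bar>e\<bar> < \<delta> \<le> \<rho>\<close>.\<close>
lemma powser2_dist_const_term_le: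
  assumes f: "powser2_on r c f" and \<rho>: "0 < \<rho>" "\<rho> < r" and \<delta>: "0 < \<delta>" "\<delta> \<le> \<rho>"
    and h: "norm h < \<delta>" and e: "norm e < \<delta>"
  shows "norm (f h e - c 0 0) \<le> \<delta> / \<rho> * (\<Sum>\<^sub>\<infinity>(i,j). norm (c i j) * \<rho> ^ i * \<rho> ^ j)"
proof -
  have sN: "(\<lambda>(i,j). norm (c i j) * \<rho> ^ i * \<rho> ^ j) summable_on UNIV"
    using powser2_abs_summable[OF f, of \<rho> \<rho>] \<rho> by simp
  define d where "d = (\<lambda>(i,j). if (i,j) = (0,0) then 0 else c i j * h ^ i * e ^ j)"
  have "((\<lambda>(i,j). c i j * h ^ i * e ^ j) has_sum f h e) UNIV" using f h e \<delta> \<rho> by auto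
  moreover have "((\<lambda>n. if n = (0,0) then c 0 0 else 0) has_sum c 0 0) UNIV"
    by (rule has_sum_finite_neutralI[where B="{(0,0)}"]) auto
  ultimately have "((\<lambda>n. (\<lambda>(i,j). c i j * h ^ i * e ^ j) n - (if n = (0,0) then c 0 0 else 0))
      has_sum (f h e - c 0 0)) UNIV"
    by (rule has_sum_diff)
  moreover have "(\<lambda>n. (\<lambda>(i,j). c i j * h ^ i * e ^ j) n - (if n = (0,0) then c 0 0 else 0)) = d"
    by (auto simp: d_def fun_eq_iff)
  ultimately have hd: "(d has_sum (f h e - c 0 0)) UNIV" by simp
  have bd: "norm (d n) \<le> \<delta> / \<rho> * (\<lambda>(i,j). norm (c i j) * \<rho> ^ i * \<rho> ^ j) n" for n
  proof (cases n)
    case (Pair i j)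
    show ?thesis
    proof (cases "(i,j) = (0,0)")
      case False
      then obtain m where m: "i + j = Suc m" by (cases "i + j") auto
      have "norm h ^ i * norm e ^ j \<le> \<delta> ^ i * \<delta> ^ j"
        using h e \<delta> by (intro mult_mono power_mono) auto
      also have "\<dots> = \<delta> * \<delta> ^ m" by (simp flip: power_add add: m)
      also have "\<dots> \<le> \<delta> * \<rho> ^ m" using \<delta> by (intro mult_left_mono power_mono) auto
      also have "\<dots> = \<delta> / \<rho> * (\<rho> ^ i * \<rho> ^ j)" using \<rho> by (simp flip: power_add add: m)
      finally have "norm (c i j) * (norm h ^ i * norm e ^ j) \<le> norm (c i j) * (\<delta> / \<rho> * (\<rho> ^ i * \<rho> ^ j))"
        by (rule mult_left_mono) simp
      then show ?thesis using False by (auto simp add: Pair d_def norm_mult norm_power mult_ac)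
    qed (use \<delta> \<rho> Pair d_def in simp)
  qed
  have sd: "(\<lambda>n. norm (d n)) summable_on UNIV"
    by (rule summable_on_comparison_test[OF summable_on_cmult_right[OF sN, of "\<delta>/\<rho>"]])
      (use bd in auto)
  have "norm (f h e - c 0 0) \<le> (\<Sum>\<^sub>\<infinity>n. norm (d n))"
    using norm_infsum_bound[of d UNIV] sd hd by (simp add: infsumI)
  also have "\<dots> \<le> (\<Sum>\<^sub>\<infinity>n. \<delta> / \<rho> * (\<lambda>(i,j). norm (c i j) * \<rho> ^ i * \<rho> ^ j) n)"
    by (rule infsum_mono[OF sd summable_on_cmult_right[OF sN]]) (use bd in auto)
  also have "\<dots> = \<delta> / \<rho> * (\<Sum>\<^sub>\<infinity>(i,j). norm (c i j) * \<rho> ^ i * \<rho> ^ j)"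
    by (rule infsum_cmult_right')
  finally show ?thesis .
qed

lemma powser2_nonzero_near_0:
  assumes f: "powser2_on r c f" and r: "0 < r" and nz: "f 0 0 \<noteq> 0"
  obtains \<delta> where "0 < \<delta>" "\<And>h e. norm h < \<delta> \<Longrightarrow> norm e < \<delta> \<Longrightarrow> f h e \<noteq> 0"
proof -
  define \<rho> where "\<rho> = r / 2"
  have \<rho>: "0 < \<rho>" "\<rho> < r" using r by (auto simp: \<rho>_def)
  define N where "N = (\<Sum>\<^sub>\<infinity>(i,j). norm (c i j) * \<rho> ^ i * \<rho> ^ j)"
  have N0: "0 \<le> N" unfolding N_def by (rule infsum_nonneg) (use \<rho> in \<open>auto split: prod.splits\<close>)
  have c00: "c 0 0 = f 0 0" using powser2_at_0[OF f r] by simp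
  define \<delta> where "\<delta> = min \<rho> (\<rho> * norm (c 0 0) / (2 * (N + 1)))"
  have \<delta>: "0 < \<delta>" "\<delta> \<le> \<rho>" using \<rho> nz c00 N0 by (auto simp: \<delta>_def)
  have "\<delta> / \<rho> \<le> norm (c 0 0) / (2 * (N + 1))" using \<rho> by (simp add: \<delta>_def field_simps)
  then have "\<delta> / \<rho> * N \<le> norm (c 0 0) / (2 * (N + 1)) * N" using N0 by (rule mult_right_mono)
  also have "\<dots> < norm (c 0 0)"
  proof -
    have "0 < N * norm (f 0 0) + 2 * norm (f 0 0)" using nz N0 by (intro add_nonneg_pos) auto
    then show ?thesis using N0 c00 by (simp add: field_simps)
  qed
  finally have \<delta>N: "\<delta> / \<rho> * N < norm (c 0 0)" .
  show ?thesis
  proof (rule that[OF \<delta>(1)])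
    fix h e :: complex assume "norm h < \<delta>" "norm e < \<delta>"
    from powser2_dist_const_term_le[OF f \<rho> \<delta> this] \<delta>N
    have "norm (f h e - c 0 0) < norm (c 0 0)" unfolding N_def by linarith
    then show "f h e \<noteq> 0" by auto
  qed
qed

lemma analytic0_2I: "0 < r \<Longrightarrow> powser2_on r c f \<Longrightarrow> analytic0_2 f"
  unfolding analytic0_2_def by blast

lemma analytic0_4I: "0 < r \<Longrightarrow> powser4_on r c F \<Longrightarrow> analytic0_4 F"
  unfolding analytic0_4_def by blast

lemma analytic0_2_deriv:
  assumes "analytic0_2 f"
  obtains r where "0 < r"
    "\<And>h e. norm h < r \<Longrightarrow> norm e < r \<Longrightarrow> ((\<lambda>s. f s e) has_field_derivative deriv (\<lambda>s. f s e) h) (at h)"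
proof -
  from assms obtain r c where r: "0 < r" "powser2_on r c f" unfolding analytic0_2_def by blast
  show ?thesis by (rule that[OF r(1) powser2_deriv[OF r(2)]])
qed

lemma analytic0_2_uminus:
  assumes "analytic0_2 a"
  shows "analytic0_2 (\<lambda>h e. - a h e)"
proof -
  from assms obtain r c where r: "0 < r" "powser2_on r c a" unfolding analytic0_2_def by blast
  have neg: "powser2_on r (\<lambda>i j. - c i j) (\<lambda>h e. - a h e)"
  proof (intro allI impI)
    fix z1 z2 :: complex assume "norm z1 < r \<and> norm z2 < r"
    with r have "((\<lambda>(i,j). c i j * z1 ^ i * z2 ^ j) has_sum a z1 z2) UNIV" by simp
    then have "((\<lambda>x. - (\<lambda>(i,j). c i j * z1 ^ i * z2 ^ j) x) has_sum - a z1 z2) UNIV"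
      by (rule has_sum_uminusI)
    moreover have "(\<lambda>x. - (\<lambda>(i,j). c i j * z1 ^ i * z2 ^ j) x) = (\<lambda>(i,j). - c i j * z1 ^ i * z2 ^ j)"
      by (auto simp: fun_eq_iff)
    ultimately show "((\<lambda>(i,j). - c i j * z1 ^ i * z2 ^ j) has_sum - a z1 z2) UNIV" by simp
  qed
  show ?thesis by (rule analytic0_2I[OF r(1) neg])
qed

abbreviation polydisc_eq :: "real \<Rightarrow> fn4 \<Rightarrow> fn4 \<Rightarrow> bool" where
  "polydisc_eq \<rho> F G \<equiv> (\<forall>u1 u2 x e. norm u1 < \<rho> \<and> norm u2 < \<rho> \<and> norm x < \<rho> \<and> norm e < \<rho> \<longrightarrow>
      F u1 u2 x e = G u1 u2 x e)"

lemma polydisc_eq_partials: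
  assumes eq: "polydisc_eq \<rho> F G" and p: "norm p1 < \<rho>" "norm p2 < \<rho>" "norm p3 < \<rho>" "norm p4 < \<rho>"
  shows "d_u1 F p1 p2 p3 p4 = d_u1 G p1 p2 p3 p4" "d_u2 F p1 p2 p3 p4 = d_u2 G p1 p2 p3 p4"
    "d_x F p1 p2 p3 p4 = d_x G p1 p2 p3 p4"
proof -
  have ev: "eventually (\<lambda>t. t \<in> ball 0 \<rho>) (nhds q)" if "norm q < \<rho>" for q :: complex
    using that by (intro eventually_nhds_in_open) auto
  show "d_u1 F p1 p2 p3 p4 = d_u1 G p1 p2 p3 p4" unfolding d_u1_def
    by (rule deriv_cong_ev[OF eventually_mono[OF ev[OF p(1)]] refl]) (use eq p in auto)
  show "d_u2 F p1 p2 p3 p4 = d_u2 G p1 p2 p3 p4" unfolding d_u2_def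
    by (rule deriv_cong_ev[OF eventually_mono[OF ev[OF p(2)]] refl]) (use eq p in auto)
  show "d_x F p1 p2 p3 p4 = d_x G p1 p2 p3 p4" unfolding d_x_def
    by (rule deriv_cong_ev[OF eventually_mono[OF ev[OF p(3)]] refl]) (use eq p in auto)
qed

lemma analytic0_4_cong:
  assumes "analytic0_4 G" "polydisc_eq \<rho> F G" "0 < \<rho>"
  shows "analytic0_4 F"
proof -
  from assms(1) obtain r c where r: "0 < r" "powser4_on r c G" unfolding analytic0_4_def by blast
  have F: "powser4_on (min r \<rho>) c F"
  proof (intro allI impI)
    fix z1 z2 z3 z4 :: complex
    assume z: "norm z1 < min r \<rho> \<and> norm z2 < min r \<rho> \<and> norm z3 < min r \<rho> \<and> norm z4 < min r \<rho>"
    with assms(2) have "F z1 z2 z3 z4 = G z1 z2 z3 z4" by simp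
    with r(2) z show "((\<lambda>(i,j,k,l). c i j k l * z1 ^ i * z2 ^ j * z3 ^ k * z4 ^ l) has_sum F z1 z2 z3 z4) UNIV"
      by simp
  qed
  have pos: "0 < min r \<rho>" using r assms(3) by simp
  show ?thesis by (rule analytic0_4I[OF pos F])
qed

lemma analytic0_4_swap12:
  assumes "analytic0_4 F"
  shows "analytic0_4 (\<lambda>u1 u2 x e. F u2 u1 x e)"
proof -
  from assms obtain r c where r: "0 < r" "powser4_on r c F" unfolding analytic0_4_def by blast
  show ?thesis by (rule analytic0_4I[OF r(1) powser4_swap12[OF r(2)]])
qed

lemma analytic0_4_zero: "analytic0_4 (\<lambda>u1 u2 x e. 0)"
  unfolding analytic0_4_def
  by (rule exI[of _ 1], rule conjI, simp, rule exI[of _ "\<lambda>i j k l. 0"]) (simp add: case_prod_unfold)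

section \<open>Rotation weights\<close>

lemma rotated_monomial:
  "(exp (\<i> * s) * u1) ^ i * (exp (- (\<i> * s)) * u2) ^ j
     = u1 ^ i * u2 ^ j * exp (\<i> * s * of_int (int i - int j))"
proof -
  have "exp (\<i> * s) ^ i * exp (- (\<i> * s)) ^ j = exp (\<i> * s * of_int (int i - int j))"
    by (simp flip: exp_of_nat_mult exp_add add: algebra_simps)
  then show ?thesis by (simp add: power_mult_distrib mult_ac)
qed

lemma powser4_euler_operator:
  assumes F: "powser4_on r c F" and z: "norm z1 < r" "norm z2 < r" "norm z3 < r" "norm z4 < r"
  shows "((\<lambda>(i,j,k,l). (of_nat i - of_nat j) * (c i j k l * z1 ^ i * z2 ^ j * z3 ^ k * z4 ^ l))
      has_sum z1 * d_u1 F z1 z2 z3 z4 - z2 * d_u2 F z1 z2 z3 z4) UNIV"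
proof -
  have termwise: "z1 * (c i j k l * (of_nat i * z1 ^ (i - 1)) * (z2 ^ j * z3 ^ k * z4 ^ l))
      - z2 * (c i j k l * (of_nat j * z2 ^ (j - 1)) * (z1 ^ i * z3 ^ k * z4 ^ l))
      = (of_nat i - of_nat j) * (c i j k l * z1 ^ i * z2 ^ j * z3 ^ k * z4 ^ l)" for i j k l
    by (cases i; cases j) (simp_all add: algebra_simps)
  have "((\<lambda>n. z1 * (\<lambda>(i,j,k,l). c i j k l * (of_nat i * z1 ^ (i - 1)) * (z2 ^ j * z3 ^ k * z4 ^ l)) n
      - z2 * (\<lambda>(i,j,k,l). c i j k l * (of_nat j * z2 ^ (j - 1)) * (z1 ^ i * z3 ^ k * z4 ^ l)) n)
      has_sum z1 * d_u1 F z1 z2 z3 z4 - z2 * d_u2 F z1 z2 z3 z4) UNIV"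
    by (intro has_sum_diff has_sum_cmult_right powser4_d_u1(2)[OF F z] powser4_d_u2(2)[OF F z])
  moreover have "(\<lambda>n. z1 * (\<lambda>(i,j,k,l). c i j k l * (of_nat i * z1 ^ (i - 1)) * (z2 ^ j * z3 ^ k * z4 ^ l)) n
      - z2 * (\<lambda>(i,j,k,l). c i j k l * (of_nat j * z2 ^ (j - 1)) * (z1 ^ i * z3 ^ k * z4 ^ l)) n)
    = (\<lambda>(i,j,k,l). (of_nat i - of_nat j) * (c i j k l * z1 ^ i * z2 ^ j * z3 ^ k * z4 ^ l))"
    by (auto simp only: termwise split: prod.splits)
  ultimately show ?thesis by simp
qed

text \<open>Along the orbit the power series of \<open>F\<close> becomes a Fourier series in \<open>s\<close>.\<close>
lemma has_field_derivative_rotation: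
  assumes F: "powser4_on r c F"
    and u: "3 * norm u1 < r" "3 * norm u2 < r" "norm z3 < r" "norm z4 < r" and t: "\<bar>Im t\<bar> < 1"
  defines "P1 \<equiv> \<lambda>s. exp (\<i> * s) * u1" and "P2 \<equiv> \<lambda>s. exp (- (\<i> * s)) * u2"
  shows "((\<lambda>s. F (P1 s) (P2 s) z3 z4) has_field_derivative
      \<i> * (P1 t * d_u1 F (P1 t) (P2 t) z3 z4 - P2 t * d_u2 F (P1 t) (P2 t) z3 z4)) (at t)"
proof -
  have P: "norm (P1 s) < r" "norm (P2 s) < r" if "\<bar>Im s\<bar> < 1" for s
  proof -
    have "norm (P1 s) \<le> 3 * norm u1" "norm (P2 s) \<le> 3 * norm u2"
      unfolding P1_def P2_def using norm_rotation_le[OF that] by auto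
    then show "norm (P1 s) < r" "norm (P2 s) < r" using u by linarith+
  qed
  define C where "C = (\<lambda>(i,j,k,l). c i j k l * u1 ^ i * u2 ^ j * z3 ^ k * z4 ^ l)"
  define q where "q = (\<lambda>(i::nat,j::nat,k::nat,l::nat). int i - int j)"
  have sm: "(\<lambda>n. norm (C n) * 3 ^ nat \<bar>q n\<bar>) summable_on UNIV"
  proof (rule summable_on_comparison_test)
    show "(\<lambda>(i,j,k,l). norm (c i j k l) * (3 * norm u1) ^ i * (3 * norm u2) ^ j * norm z3 ^ k
        * norm z4 ^ l) summable_on UNIV"
      by (rule powser4_abs_summable[OF F]) (use u in auto)
    fix n :: "nat \<times> nat \<times> nat \<times> nat"
    obtain i j k l where n: "n = (i,j,k,l)" by (metis prod_cases4)
    have "(3::real) ^ nat \<bar>q n\<bar> \<le> 3 ^ i * 3 ^ j"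
      unfolding power_add[symmetric] by (rule power_increasing) (auto simp: n q_def)
    then have "norm (C n) * 3 ^ nat \<bar>q n\<bar> \<le> norm (C n) * (3 ^ i * 3 ^ j)"
      by (intro mult_left_mono) auto
    then show "norm (C n) * 3 ^ nat \<bar>q n\<bar> \<le> (\<lambda>(i,j,k,l). norm (c i j k l) * (3 * norm u1) ^ i
        * (3 * norm u2) ^ j * norm z3 ^ k * norm z4 ^ l) n"
      by (simp add: n C_def norm_mult norm_power power_mult_distrib mult_ac)
  qed auto
  have inf: "infinite (UNIV :: (nat \<times> nat \<times> nat \<times> nat) set)" by (simp add: finite_prod)
  have rotated_term: "c i j k l * P1 s ^ i * P2 s ^ j * z3 ^ k * z4 ^ l
      = C (i,j,k,l) * exp (\<i> * s * of_int (q (i,j,k,l)))" for s i j k l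
  proof -
    have "c i j k l * P1 s ^ i * P2 s ^ j * z3 ^ k * z4 ^ l
        = c i j k l * (P1 s ^ i * P2 s ^ j) * z3 ^ k * z4 ^ l"
      by (simp only: mult.assoc)
    also have "\<dots> = c i j k l * (u1 ^ i * u2 ^ j * exp (\<i> * s * of_int (int i - int j))) * z3 ^ k * z4 ^ l"
      unfolding P1_def P2_def rotated_monomial ..
    finally show ?thesis by (simp add: C_def q_def mult_ac)
  qed
  have "(\<Sum>\<^sub>\<infinity>n. C n * exp (\<i> * s * of_int (q n))) = F (P1 s) (P2 s) z3 z4" if "s \<in> {s. \<bar>Im s\<bar> < 1}" for s
  proof -
    have "((\<lambda>(i,j,k,l). c i j k l * P1 s ^ i * P2 s ^ j * z3 ^ k * z4 ^ l) has_sum F (P1 s) (P2 s) z3 z4) UNIV"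
      using F P that u by auto
    then show ?thesis unfolding rotated_term by (simp add: infsumI case_prod_unfold)
  qed
  note D = has_field_derivative_transform_within_open[OF has_field_derivative_fourier_sum[OF inf t sm]
      open_strip _ this]
  have "\<i> * ((of_nat i - of_nat j) * (c i j k l * P1 t ^ i * P2 t ^ j * z3 ^ k * z4 ^ l))
      = C (i,j,k,l) * (\<i> * of_int (q (i,j,k,l)) * exp (\<i> * t * of_int (q (i,j,k,l))))" for i j k l
    unfolding rotated_term by (simp add: q_def mult_ac)
  then have "(\<lambda>(i,j,k,l). \<i> * ((of_nat i - of_nat j) * (c i j k l * P1 t ^ i * P2 t ^ j * z3 ^ k * z4 ^ l)))
      = (\<lambda>n. C n * (\<i> * of_int (q n) * exp (\<i> * t * of_int (q n))))"
    by (auto simp only: split: prod.splits)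
  with has_sum_cmult_right[OF powser4_euler_operator[OF F P[OF t] u(3,4)], of \<i>]
  have "(\<Sum>\<^sub>\<infinity>n. C n * (\<i> * of_int (q n) * exp (\<i> * t * of_int (q n))))
      = \<i> * (P1 t * d_u1 F (P1 t) (P2 t) z3 z4 - P2 t * d_u2 F (P1 t) (P2 t) z3 z4)"
    by (simp add: infsumI case_prod_unfold)
  then show ?thesis using D t by simp
qed

lemma rotation_invariance:
  assumes F: "powser4_on r c F" and R: "R \<le> r" and z: "norm z3 < r" "norm z4 < r"
    and euler: "\<And>u1 u2. 3 * norm u1 < R \<Longrightarrow> 3 * norm u2 < R \<Longrightarrow>
        u1 * d_u1 F u1 u2 z3 z4 - u2 * d_u2 F u1 u2 z3 z4 = \<sigma> * F u1 u2 z3 z4"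
    and u: "9 * norm u1 < R" "9 * norm u2 < R" and t: "\<bar>Im t\<bar> < 1"
  shows "exp (- (\<i> * t * \<sigma>)) * F (exp (\<i> * t) * u1) (exp (- (\<i> * t)) * u2) z3 z4 = F u1 u2 z3 z4"
proof -
  define P1 where "P1 s = exp (\<i> * s) * u1" for s
  define P2 where "P2 s = exp (- (\<i> * s)) * u2" for s
  have "((\<lambda>s. exp (- (\<i> * s * \<sigma>)) * F (P1 s) (P2 s) z3 z4) has_field_derivative 0) (at s)"
    if s: "\<bar>Im s\<bar> < 1" for s
  proof -
    have "3 * norm (P1 s) < R" "3 * norm (P2 s) < R"
      using norm_rotation_le[OF s, of u1] norm_rotation_le[OF s, of u2] u
      unfolding P1_def P2_def by linarith+
    note euler_s = euler[OF this]
    have "3 * norm u1 < r" "3 * norm u2 < r"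
      using u R norm_ge_zero[of u1] norm_ge_zero[of u2] by linarith+
    note rot = has_field_derivative_rotation[OF F this z s, folded P1_def P2_def]
    have "((\<lambda>s. exp (- (\<i> * s * \<sigma>))) has_field_derivative - (\<i> * \<sigma>) * exp (- (\<i> * s * \<sigma>))) (at s)"
      by (auto intro!: derivative_eq_intros)
    from DERIV_mult[OF this rot[unfolded euler_s]] show ?thesis
      by (simp add: algebra_simps)
  qed
  from zero_deriv_imp_eq_on_strip[OF this t, of 0] show ?thesis
    by (simp add: P1_def P2_def)
qed

text \<open>If \<open>F\<close> does not depend on \<open>x\<close> and has weight \<open>\<sigma>\<close> under the rotation
  \<open>(u\<^sub>1, u\<^sub>2) \<mapsto> (e\<^sup>i\<^sup>\<theta> u\<^sub>1, e\<^sup>-\<^sup>i\<^sup>\<theta> u\<^sub>2)\<close>, comparing coefficients shows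
  \<open>c\<^sub>i\<^sub>j\<^sub>k\<^sub>l (1 - [k = 0] e\<^sup>i\<^sup>\<theta>\<^sup>(\<^sup>i\<^sup>-\<^sup>j\<^sup>-\<^sup>\<sigma>\<^sup>)) = 0\<close> for every real \<open>\<theta>\<close>.\<close>
lemma coeff_support_of_rotation_weight:
  fixes \<sigma> :: int
  assumes F: "powser4_on \<rho> c F" and \<rho>: "0 < \<rho>"
    and inv: "\<And>z1 z2 z3 z4 \<theta>. norm z1 < \<rho> \<Longrightarrow> norm z2 < \<rho> \<Longrightarrow> norm z3 < \<rho> \<Longrightarrow> norm z4 < \<rho> \<Longrightarrow>
        F z1 z2 z3 z4 = exp (- (\<i> * complex_of_real \<theta> * of_int \<sigma>)) *
           F (exp (\<i> * complex_of_real \<theta>) * z1) (exp (- (\<i> * complex_of_real \<theta>)) * z2) 0 z4"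
    and nz: "c i j k l \<noteq> 0"
  shows "k = 0 \<and> int i - int j = \<sigma>"
proof -
  define w where "w \<theta> i j k = (if k = 0 then exp (\<i> * complex_of_real \<theta> * of_int (int i - int j - \<sigma>)) else 0)"
    for \<theta> :: real and i j k :: nat
  have "powser4_on \<rho> (\<lambda>i j k l. c i j k l * w \<theta> i j k) F" for \<theta>
  proof (intro allI impI)
    fix z1 z2 z3 z4 :: complex assume z: "norm z1 < \<rho> \<and> norm z2 < \<rho> \<and> norm z3 < \<rho> \<and> norm z4 < \<rho>"
    define th where "th = complex_of_real \<theta>"
    define P1 where "P1 = exp (\<i> * th) * z1"
    define P2 where "P2 = exp (- (\<i> * th)) * z2"
    have "norm P1 = norm z1" "norm P2 = norm z2" by (simp_all add: P1_def P2_def norm_mult th_def)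
    then have "((\<lambda>(i,j,k,l). c i j k l * P1 ^ i * P2 ^ j * 0 ^ k * z4 ^ l) has_sum F P1 P2 0 z4) UNIV"
      using F z \<rho> by auto
    from has_sum_cmult_right[OF this, of "exp (- (\<i> * th * of_int \<sigma>))"]
    have "((\<lambda>(i,j,k,l). exp (- (\<i> * th * of_int \<sigma>)) * (c i j k l * P1 ^ i * P2 ^ j * 0 ^ k * z4 ^ l))
        has_sum F z1 z2 z3 z4) UNIV"
      using inv[of z1 z2 z3 z4 \<theta>] z by (simp add: P1_def P2_def th_def case_prod_unfold)
    moreover have "exp (- (\<i> * th * of_int \<sigma>)) * (c i j k l * P1 ^ i * P2 ^ j * 0 ^ k * z4 ^ l)
        = c i j k l * w \<theta> i j k * z1 ^ i * z2 ^ j * z3 ^ k * z4 ^ l" for i j k l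
    proof -
      have "exp (- (\<i> * th * of_int \<sigma>)) * (P1 ^ i * P2 ^ j)
          = z1 ^ i * z2 ^ j * exp (\<i> * th * of_int (int i - int j - \<sigma>))"
        unfolding P1_def P2_def rotated_monomial by (simp flip: exp_add add: algebra_simps)
      then show ?thesis by (cases "k = 0") (simp_all add: w_def th_def mult_ac)
    qed
    ultimately show "((\<lambda>(i,j,k,l). c i j k l * w \<theta> i j k * z1 ^ i * z2 ^ j * z3 ^ k * z4 ^ l)
        has_sum F z1 z2 z3 z4) UNIV"
      by (simp add: case_prod_unfold)
  qed
  then have w1: "w \<theta> i j k = 1" for \<theta>
    using powser4_coeffs_unique[OF \<rho> F, of "\<lambda>i j k l. c i j k l * w \<theta> i j k" i j k l] nz by simp
  have "k = 0" using w1[of 0] by (auto simp: w_def split: if_splits)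
  moreover have "int i - int j = \<sigma>"
  proof (rule ccontr)
    define m where "m = int i - int j - \<sigma>"
    assume "int i - int j \<noteq> \<sigma>"
    then have "m \<noteq> 0" by (simp add: m_def)
    then have "exp (\<i> * complex_of_real (pi / of_int m) * of_int m) = exp (\<i> * pi)"
      by (simp add: field_simps)
    with w1[of "pi / of_int m"] \<open>k = 0\<close> show False by (simp add: w_def m_def)
  qed
  ultimately show ?thesis ..
qed

lemma coeff_support_of_euler_equation:
  fixes \<sigma> :: int
  assumes F: "powser4_on r c F" and R: "0 < R" "R \<le> r"
    and dx: "\<And>u1 u2 x e. norm u1 < R \<Longrightarrow> norm u2 < R \<Longrightarrow> norm x < R \<Longrightarrow> norm e < R \<Longrightarrow>
        d_x F u1 u2 x e = 0"
    and euler: "\<And>u1 u2 e. 3 * norm u1 < R \<Longrightarrow> 3 * norm u2 < R \<Longrightarrow> norm e < R \<Longrightarrow>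
        u1 * d_u1 F u1 u2 0 e - u2 * d_u2 F u1 u2 0 e = of_int \<sigma> * F u1 u2 0 e"
    and nz: "c i j k l \<noteq> 0"
  shows "k = 0 \<and> int i - int j = \<sigma>"
proof (rule coeff_support_of_rotation_weight[where \<rho>="R / 9" and c=c and F=F, OF _ _ _ nz])
  show "powser4_on (R / 9) c F" "0 < R / 9" using F R by auto
  fix z1 z2 z3 z4 :: complex and \<theta> :: real
  assume z: "norm z1 < R / 9" "norm z2 < R / 9" "norm z3 < R / 9" "norm z4 < R / 9"
  then have zR: "norm z1 < R" "norm z2 < R" "norm z3 < R" "norm z4 < R"
    using norm_ge_zero[of z1] norm_ge_zero[of z2] norm_ge_zero[of z3] norm_ge_zero[of z4]
    by (auto simp del: norm_ge_zero)
  have "F z1 z2 z3 z4 = F z1 z2 0 z4"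
  proof (rule zero_deriv_imp_eq_on_ball[where g="\<lambda>t. F z1 z2 t z4"])
    fix t :: complex assume "norm t < R"
    with powser4_d_x[OF F, of z1 z2 t z4] dx[OF zR(1,2) _ zR(4)] zR R
    show "((\<lambda>t. F z1 z2 t z4) has_field_derivative 0) (at t)" by auto
  qed (use zR R in auto)
  also have "\<dots> = exp (- (\<i> * complex_of_real \<theta> * of_int \<sigma>)) *
      F (exp (\<i> * complex_of_real \<theta>) * z1) (exp (- (\<i> * complex_of_real \<theta>)) * z2) 0 z4"
    by (rule rotation_invariance[OF F R(2) _ _ euler, symmetric]) (use z zR R in auto)
  finally show "F z1 z2 z3 z4 = exp (- (\<i> * complex_of_real \<theta> * of_int \<sigma>)) *
      F (exp (\<i> * complex_of_real \<theta>) * z1) (exp (- (\<i> * complex_of_real \<theta>)) * z2) 0 z4" .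
qed

text \<open>The coefficient of \<open>h\<^sup>j\<close> in \<open>a\<close> is that of \<open>u\<^sub>1\<^sup>j\<^sup>+\<^sup>1u\<^sub>2\<^sup>j\<close>, so the series of \<open>a\<close> is only
  controlled for \<open>\<bar>h\<bar> < (r/2)\<^sup>2\<close>.\<close>
lemma powser4_factor:
  assumes F: "powser4_on r c F" and r: "0 < r"
    and supp: "\<And>i j k l. k \<noteq> 0 \<or> i \<noteq> Suc j \<Longrightarrow> c i j k l = 0"
    and a_def: "a = (\<lambda>h e. \<Sum>\<^sub>\<infinity>(j,l). c (Suc j) j 0 l * h ^ j * e ^ l)"
  defines "\<rho> \<equiv> min (r / 2 * (r / 2)) (r / 2)"
  shows "0 < \<rho>" and "powser2_on \<rho> (\<lambda>j l. c (Suc j) j 0 l) a"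
    and "\<And>z1 z2 z3 z4. norm z1 < r \<Longrightarrow> norm z2 < r \<Longrightarrow> norm z3 < r \<Longrightarrow> norm z4 < \<rho> \<Longrightarrow>
          norm (z1 * z2) < \<rho> \<Longrightarrow> F z1 z2 z3 z4 = a (z1 * z2) z4 * z1"
proof -
  have supp': "k = 0 \<and> i = Suc j" if "c i j k l \<noteq> 0" for i j k l
    using supp that by blast
  define g where "g = (\<lambda>(j::nat,l::nat). (Suc j, j, 0::nat, l))"
  have g: "inj g" by (auto simp: g_def inj_def)
  show "0 < \<rho>" using r by (simp add: \<rho>_def)
  have sub: "(\<lambda>(j,l). norm (c (Suc j) j 0 l) * (r/2) ^ Suc j * (r/2) ^ j * (r/2) ^ l) summable_on UNIV"
  proof -
    have "(\<lambda>(i,j,k,l). norm (c i j k l) * (r/2) ^ i * (r/2) ^ j * (r/2) ^ k * (r/2) ^ l) summable_on range g"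
      by (rule summable_on_subset_banach[OF powser4_abs_summable[OF F]]) (use r in auto)
    then have "((\<lambda>(i,j,k,l). norm (c i j k l) * (r/2) ^ i * (r/2) ^ j * (r/2) ^ k * (r/2) ^ l) \<circ> g)
        summable_on UNIV"
      using summable_on_reindex[OF g] by blast
    then show ?thesis by (simp add: g_def o_def case_prod_unfold)
  qed
  show a: "powser2_on \<rho> (\<lambda>j l. c (Suc j) j 0 l) a"
  proof (intro allI impI)
    fix h e :: complex assume he: "norm h < \<rho> \<and> norm e < \<rho>"
    have "(\<lambda>n. norm ((\<lambda>(j,l). c (Suc j) j 0 l * h ^ j * e ^ l) n)) summable_on UNIV"
    proof (rule summable_on_comparison_test[OF summable_on_cmult_right[OF sub, of "2/r"]])
      fix n :: "nat \<times> nat"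
      obtain j l where n: "n = (j,l)" by fastforce
      have "norm h ^ j * norm e ^ l \<le> (r/2 * (r/2)) ^ j * (r/2) ^ l"
        using he r by (intro mult_mono power_mono) (auto simp: \<rho>_def)
      also have "\<dots> = (r/2) ^ j * (r/2) ^ j * (r/2) ^ l"
        by (simp only: power_mult_distrib)
      also have "\<dots> = 2 / r * ((r/2) ^ Suc j * (r/2) ^ j * (r/2) ^ l)"
        using r by simp
      finally show "norm ((\<lambda>(j,l). c (Suc j) j 0 l * h ^ j * e ^ l) n)
          \<le> 2 / r * (\<lambda>(j,l). norm (c (Suc j) j 0 l) * (r/2) ^ Suc j * (r/2) ^ j * (r/2) ^ l) n"
        using mult_left_mono[OF _ norm_ge_zero[of "c (Suc j) j 0 l"]]
        by (fastforce simp: n norm_mult norm_power mult_ac)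
    qed auto
    then show "((\<lambda>(j,l). c (Suc j) j 0 l * h ^ j * e ^ l) has_sum a h e) UNIV"
      unfolding a_def by (rule has_sum_infsum[OF abs_summable_summable])
  qed
  fix z1 z2 z3 z4 :: complex
  assume z: "norm z1 < r" "norm z2 < r" "norm z3 < r" "norm z4 < \<rho>" and z12: "norm (z1 * z2) < \<rho>"
  have "\<rho> \<le> r" using r by (simp add: \<rho>_def)
  then have "((\<lambda>(i,j,k,l). c i j k l * z1 ^ i * z2 ^ j * z3 ^ k * z4 ^ l) has_sum F z1 z2 z3 z4) UNIV"
    using F z by auto
  then have "((\<lambda>(i,j,k,l). c i j k l * z1 ^ i * z2 ^ j * z3 ^ k * z4 ^ l) has_sum F z1 z2 z3 z4) (range g)"
    by (rule has_sum_cong_neutral[THEN iffD1, rotated -1])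
       (auto simp: g_def image_iff dest!: supp' split: prod.splits)
  then have "(((\<lambda>(i,j,k,l). c i j k l * z1 ^ i * z2 ^ j * z3 ^ k * z4 ^ l) \<circ> g) has_sum F z1 z2 z3 z4) UNIV"
    using has_sum_reindex[OF g] by blast
  then have F_sum: "((\<lambda>(j,l). c (Suc j) j 0 l * (z1 * z2) ^ j * z4 ^ l * z1) has_sum F z1 z2 z3 z4) UNIV"
    by (simp add: g_def o_def case_prod_unfold power_mult_distrib mult_ac)
  have "((\<lambda>(j,l). c (Suc j) j 0 l * (z1 * z2) ^ j * z4 ^ l) has_sum a (z1 * z2) z4) UNIV"
    using a z z12 by auto
  from has_sum_cmult_left[OF this, of z1]
  have "((\<lambda>(j,l). c (Suc j) j 0 l * (z1 * z2) ^ j * z4 ^ l * z1) has_sum a (z1 * z2) z4 * z1) UNIV"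
    by (simp add: case_prod_unfold)
  with F_sum show "F z1 z2 z3 z4 = a (z1 * z2) z4 * z1" by (rule has_sum_unique)
qed

section \<open>Hamiltonian fields\<close>

lemma ham_component_partials:
  fixes g :: "complex \<Rightarrow> complex \<Rightarrow> complex \<Rightarrow> complex"
  assumes g: "((\<lambda>s. g s x e) has_field_derivative g') (at (p1 * p2))"
  shows "d_u1 (\<lambda>u1 u2 x e. g (u1 * u2) x e * u1) p1 p2 x e = g' * p2 * p1 + g (p1 * p2) x e"
    and "d_u2 (\<lambda>u1 u2 x e. g (u1 * u2) x e * u1) p1 p2 x e = g' * p1 * p1"
    and "d_u1 (\<lambda>u1 u2 x e. g (u1 * u2) x e * u2) p1 p2 x e = g' * p2 * p2"
    and "d_u2 (\<lambda>u1 u2 x e. g (u1 * u2) x e * u2) p1 p2 x e = g' * p1 * p2 + g (p1 * p2) x e"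
proof -
  have g1: "((\<lambda>t. g (t * p2) x e) has_field_derivative g' * p2) (at p1)"
    by (rule DERIV_chain2[where f="\<lambda>s. g s x e" and g="\<lambda>t. t * p2", OF g, simplified])
      (auto intro!: derivative_eq_intros)
  have g2: "((\<lambda>t. g (p1 * t) x e) has_field_derivative g' * p1) (at p2)"
    by (rule DERIV_chain2[where f="\<lambda>s. g s x e" and g="\<lambda>t. p1 * t", OF g, simplified])
      (auto intro!: derivative_eq_intros)
  show "d_u1 (\<lambda>u1 u2 x e. g (u1 * u2) x e * u1) p1 p2 x e = g' * p2 * p1 + g (p1 * p2) x e"
    unfolding d_u1_def using DERIV_imp_deriv[OF DERIV_mult[OF g1 DERIV_ident]] by (simp add: algebra_simps)
  show "d_u2 (\<lambda>u1 u2 x e. g (u1 * u2) x e * u1) p1 p2 x e = g' * p1 * p1"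
    unfolding d_u2_def using DERIV_imp_deriv[OF DERIV_mult[OF g2 DERIV_const[of p1]]] by simp
  show "d_u1 (\<lambda>u1 u2 x e. g (u1 * u2) x e * u2) p1 p2 x e = g' * p2 * p2"
    unfolding d_u1_def using DERIV_imp_deriv[OF DERIV_mult[OF g1 DERIV_const[of p2]]] by simp
  show "d_u2 (\<lambda>u1 u2 x e. g (u1 * u2) x e * u2) p1 p2 x e = g' * p1 * p2 + g (p1 * p2) x e"
    unfolding d_u2_def using DERIV_imp_deriv[OF DERIV_mult[OF g2 DERIV_ident]] by (simp add: algebra_simps)
qed

lemma d_x_const_in_x:
  "d_x (\<lambda>u1 u2 x e. G u1 u2 e) p1 p2 x e = 0"
  by (simp add: d_x_def)

lemma lie_bracket_ham_forms_eq_0: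
  fixes X Y :: vfield and a :: "complex \<Rightarrow> complex \<Rightarrow> complex" and g :: "complex \<Rightarrow> complex \<Rightarrow> complex \<Rightarrow> complex"
  assumes X1: "polydisc_eq \<rho> (fst X) (\<lambda>u1 u2 x e. a (u1 * u2) e * u1)"
    and X2: "polydisc_eq \<rho> (fst (snd X)) (\<lambda>u1 u2 x e. - a (u1 * u2) e * u2)"
    and X3: "polydisc_eq \<rho> (snd (snd X)) (\<lambda>u1 u2 x e. 0)"
    and Y1: "polydisc_eq \<rho> (fst Y) (\<lambda>u1 u2 x e. g (u1 * u2) x e * u1)"
    and Y2: "polydisc_eq \<rho> (fst (snd Y)) (\<lambda>u1 u2 x e. - g (u1 * u2) x e * u2)"
    and Y3: "d_u1 (snd (snd Y)) p1 p2 x e = 0" "d_u2 (snd (snd Y)) p1 p2 x e = 0"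
    and aD: "((\<lambda>s. a s e) has_field_derivative a') (at (p1 * p2))"
    and gD: "((\<lambda>s. g s x e) has_field_derivative g') (at (p1 * p2))"
    and p: "norm p1 < \<rho>" "norm p2 < \<rho>" "norm x < \<rho>" "norm e < \<rho>"
  shows "fst (lie_bracket X Y) p1 p2 x e = 0 \<and> fst (snd (lie_bracket X Y)) p1 p2 x e = 0
      \<and> snd (snd (lie_bracket X Y)) p1 p2 x e = 0"
proof -
  note Xd = ham_component_partials[of "\<lambda>h x e. a h e", OF aD]
    ham_component_partials[of "\<lambda>h x e. - a h e", OF DERIV_minus[OF aD]]
  note Yd = ham_component_partials[of g, OF gD]
    ham_component_partials[of "\<lambda>h x e. - g h x e", OF DERIV_minus[OF gD]]
  have val: "snd (snd X) p1 p2 x e = 0" "fst X p1 p2 x e = a (p1 * p2) e * p1"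
    "fst (snd X) p1 p2 x e = - a (p1 * p2) e * p2" "fst Y p1 p2 x e = g (p1 * p2) x e * p1"
    "fst (snd Y) p1 p2 x e = - g (p1 * p2) x e * p2"
    using X1 X2 X3 Y1 Y2 p by auto
  have dX: "d_u1 (fst X) p1 p2 x e = a' * p2 * p1 + a (p1 * p2) e"
    "d_u2 (fst X) p1 p2 x e = a' * p1 * p1" "d_x (fst X) p1 p2 x e = 0"
    "d_u1 (fst (snd X)) p1 p2 x e = - a' * p2 * p2"
    "d_u2 (fst (snd X)) p1 p2 x e = - a' * p1 * p2 + - a (p1 * p2) e" "d_x (fst (snd X)) p1 p2 x e = 0"
    "d_u1 (snd (snd X)) p1 p2 x e = 0" "d_u2 (snd (snd X)) p1 p2 x e = 0" "d_x (snd (snd X)) p1 p2 x e = 0"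
    unfolding polydisc_eq_partials[OF X1 p] polydisc_eq_partials[OF X2 p] polydisc_eq_partials[OF X3 p]
    by (simp_all only: Xd d_x_const_in_x) (simp_all add: d_u1_def d_u2_def d_x_def)
  have dY: "d_u1 (fst Y) p1 p2 x e = g' * p2 * p1 + g (p1 * p2) x e"
    "d_u2 (fst Y) p1 p2 x e = g' * p1 * p1"
    "d_u1 (fst (snd Y)) p1 p2 x e = - g' * p2 * p2"
    "d_u2 (fst (snd Y)) p1 p2 x e = - g' * p1 * p2 + - g (p1 * p2) x e"
    unfolding polydisc_eq_partials[OF Y1 p] polydisc_eq_partials[OF Y2 p] by (simp_all only: Yd)
  show ?thesis
    unfolding lie_bracket_def vf_apply_def fst_conv snd_conv val dX dY Y3
    by (simp add: algebra_simps)
qed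

lemma analytic0_4_ham_u1:
  assumes "analytic0_2 a"
  shows "analytic0_4 (\<lambda>u1 u2 x e. a (u1 * u2) e * u1)"
proof -
  from assms obtain ra ca where ra: "0 < ra" "powser2_on ra ca a" unfolding analytic0_2_def by blast
  define r where "r = min ra 1"
  define c where "c i j k l = (if i = Suc j \<and> k = 0 then ca j l else 0)" for i j k l :: nat
  define g where "g = (\<lambda>(j::nat,l::nat). (Suc j, j, 0::nat, l))"
  have g: "inj g" by (auto simp: g_def inj_def)
  have F: "powser4_on r c (\<lambda>u1 u2 x e. a (u1 * u2) e * u1)"
  proof (intro allI impI)
    fix z1 z2 z3 z4 :: complex assume z: "norm z1 < r \<and> norm z2 < r \<and> norm z3 < r \<and> norm z4 < r"
    then have "norm (z1 * z2) < r" "norm z4 < r"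
      using norm_mult_less[of z1 r z2] by (auto simp: r_def)
    then have "norm (z1 * z2) < ra" "norm z4 < ra" by (auto simp: r_def)
    then have "((\<lambda>(j,l). ca j l * (z1 * z2) ^ j * z4 ^ l) has_sum a (z1 * z2) z4) UNIV"
      using ra by auto
    from has_sum_cmult_left[OF this, of z1]
    have "(((\<lambda>(i,j,k,l). c i j k l * z1 ^ i * z2 ^ j * z3 ^ k * z4 ^ l) \<circ> g) has_sum a (z1 * z2) z4 * z1) UNIV"
      by (simp add: g_def c_def o_def case_prod_unfold power_mult_distrib mult_ac)
    then have "((\<lambda>(i,j,k,l). c i j k l * z1 ^ i * z2 ^ j * z3 ^ k * z4 ^ l) has_sum a (z1 * z2) z4 * z1) (range g)"
      using has_sum_reindex[OF g] by blast
    then show "((\<lambda>(i,j,k,l). c i j k l * z1 ^ i * z2 ^ j * z3 ^ k * z4 ^ l) has_sum a (z1 * z2) z4 * z1) UNIV"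
      by (rule has_sum_cong_neutral[THEN iffD1, rotated -1])
        (auto simp: g_def c_def image_iff split: prod.splits)
  qed
  have pos: "0 < r" using ra by (simp add: r_def)
  show ?thesis by (rule analytic0_4I[OF pos F])
qed

lemma germ_eq_ham_vfE:
  assumes "germ_eq X (ham_vf a)"
  obtains \<rho> where "0 < \<rho>" "polydisc_eq \<rho> (fst X) (\<lambda>u1 u2 x e. a (u1 * u2) e * u1)"
    "polydisc_eq \<rho> (fst (snd X)) (\<lambda>u1 u2 x e. - a (u1 * u2) e * u2)"
    "polydisc_eq \<rho> (snd (snd X)) (\<lambda>u1 u2 x e. 0)"
  using assms unfolding germ_eq_def near0_def ham_vf_def by auto

lemma ham_germ_components_analytic:
  assumes a: "analytic0_2 a" and r: "0 < r"
    and X1: "polydisc_eq r (fst X) (\<lambda>u1 u2 x e. a (u1 * u2) e * u1)"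
    and X2: "polydisc_eq r (fst (snd X)) (\<lambda>u1 u2 x e. - a (u1 * u2) e * u2)"
    and X3: "polydisc_eq r (snd (snd X)) (\<lambda>u1 u2 x e. 0)"
  shows "analytic0_4 (fst X) \<and> analytic0_4 (fst (snd X)) \<and> analytic0_4 (snd (snd X))"
proof (intro conjI)
  show "analytic0_4 (fst X)" by (rule analytic0_4_cong[OF analytic0_4_ham_u1[OF a] X1 r])
  have "polydisc_eq r (fst (snd X)) (\<lambda>u1 u2 x e. - a (u2 * u1) e * u2)"
    using X2 by (simp add: mult.commute)
  then show "analytic0_4 (fst (snd X))"
    by (rule analytic0_4_cong[OF analytic0_4_swap12[OF analytic0_4_ham_u1[OF analytic0_2_uminus[OF a]]] _ r])
  show "analytic0_4 (snd (snd X))" by (rule analytic0_4_cong[OF analytic0_4_zero X3 r])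
qed

lemma divergence_free_ham_factors:
  assumes \<rho>: "0 < \<rho>" "\<rho> \<le> 1"
    and A: "polydisc_eq \<rho> A (\<lambda>u1 u2 x e. a (u1 * u2) e * u1)"
    and B: "polydisc_eq \<rho> B (\<lambda>u1 u2 x e. b (u1 * u2) e * u2)"
    and aD: "\<And>h e. norm h < \<rho> \<Longrightarrow> norm e < \<rho> \<Longrightarrow>
      ((\<lambda>s. a s e) has_field_derivative deriv (\<lambda>s. a s e) h) (at h)"
    and bD: "\<And>h e. norm h < \<rho> \<Longrightarrow> norm e < \<rho> \<Longrightarrow>
      ((\<lambda>s. b s e) has_field_derivative deriv (\<lambda>s. b s e) h) (at h)"
    and div: "\<And>u1 u2 e. norm u1 < \<rho> \<Longrightarrow> norm u2 < \<rho> \<Longrightarrow> norm e < \<rho> \<Longrightarrow>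
      d_u1 A u1 u2 0 e + d_u2 B u1 u2 0 e = 0"
    and h: "norm h < \<rho> * \<rho> / 2" and e: "norm e < \<rho>"
  shows "a h e + b h e = 0"
proof (rule sum_eq_0_of_euler_divergence[where \<rho>="\<rho> * \<rho> / 2" and a="\<lambda>s. a s e" and b="\<lambda>s. b s e"
      and a'="\<lambda>s. deriv (\<lambda>s. a s e) s" and b'="\<lambda>s. deriv (\<lambda>s. b s e) s"])
  define p1 :: complex where "p1 = of_real (\<rho> / 2)"
  have p1: "norm p1 < \<rho>" "p1 \<noteq> 0" using \<rho> by (auto simp: p1_def)
  fix h :: complex assume h: "norm h < \<rho> * \<rho> / 2"
  define p2 where "p2 = h / p1"
  have p2: "norm p2 < \<rho>" "p1 * p2 = h"
    using h p1 \<rho> by (auto simp: p2_def p1_def norm_divide field_simps)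
  then have hr: "norm h < \<rho>" using norm_mult_less[OF p1(1) p2(1)] \<rho> by simp
  show "((\<lambda>s. a s e) has_field_derivative deriv (\<lambda>s. a s e) h) (at h)"
    "((\<lambda>s. b s e) has_field_derivative deriv (\<lambda>s. b s e) h) (at h)"
    using aD bD hr e by auto
  have z: "norm (0::complex) < \<rho>" using \<rho> by simp
  have "((\<lambda>s. a s e) has_field_derivative deriv (\<lambda>s. a s e) h) (at (p1 * p2))"
    "((\<lambda>s. b s e) has_field_derivative deriv (\<lambda>s. b s e) h) (at (p1 * p2))"
    using aD bD hr e p2(2) by auto
  note partials = ham_component_partials(1)[of "\<lambda>h x e. a h e" 0 e, OF this(1)]
    ham_component_partials(4)[of "\<lambda>h x e. b h e" 0 e, OF this(2)]
  show "a h e + h * deriv (\<lambda>s. a s e) h + b h e + h * deriv (\<lambda>s. b s e) h = 0"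
    using div[OF p1(1) p2(1) e]
    unfolding polydisc_eq_partials[OF A p1(1) p2(1) z e] polydisc_eq_partials[OF B p1(1) p2(1) z e]
      partials p2(2)
    by (simp add: algebra_simps flip: p2(2))
qed (use h in simp)

section \<open>Vertical symplectic symmetries\<close>

lemma near0_radius:
  assumes "near0 P"
  obtains r where "0 < r"
    "\<And>u1 u2 x e. norm u1 < r \<Longrightarrow> norm u2 < r \<Longrightarrow> norm x < r \<Longrightarrow> norm e < r \<Longrightarrow> P u1 u2 x e"
  using assms unfolding near0_def by blast

lemma near0I:
  assumes "0 < r"
    "\<And>u1 u2 x e. norm u1 < r \<Longrightarrow> norm u2 < r \<Longrightarrow> norm x < r \<Longrightarrow> norm e < r \<Longrightarrow> P u1 u2 x e"
  shows "near0 P"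
  unfolding near0_def using assms by blast

lemma near0_conj:
  assumes "near0 P" "near0 Q"
  shows "near0 (\<lambda>u1 u2 x e. P u1 u2 x e \<and> Q u1 u2 x e)"
proof -
  from assms obtain r s where "0 < r" "0 < s"
    "\<And>u1 u2 x e. norm u1 < r \<Longrightarrow> norm u2 < r \<Longrightarrow> norm x < r \<Longrightarrow> norm e < r \<Longrightarrow> P u1 u2 x e"
    "\<And>u1 u2 x e. norm u1 < s \<Longrightarrow> norm u2 < s \<Longrightarrow> norm x < s \<Longrightarrow> norm e < s \<Longrightarrow> Q u1 u2 x e"
    by (metis near0_radius)
  then show ?thesis by (intro near0I[of "min r s"]) auto
qed

lemma bracket_with_Z_G_at_x0:
  fixes A B C :: fn4
  assumes br: "fst (lie_bracket (A, B, C) (Z_G chi0 chi1)) p1 p2 0 e = 0"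
      "fst (snd (lie_bracket (A, B, C) (Z_G chi0 chi1))) p1 p2 0 e = 0"
    and C0: "C p1 p2 0 e = 0"
    and gD: "((\<lambda>s. chi0 s e) has_field_derivative g') (at (p1 * p2))"
  shows "A p1 p2 0 e * (chi0 (p1*p2) e + p1*p2*g') + B p1 p2 0 e * p1^2 * g'
       - chi0 (p1*p2) e * (p1 * d_u1 A p1 p2 0 e - p2 * d_u2 A p1 p2 0 e) = 0 \<and>
     - A p1 p2 0 e * p2^2 * g' - B p1 p2 0 e * (chi0 (p1*p2) e + p1*p2*g')
       - chi0 (p1*p2) e * (p1 * d_u1 B p1 p2 0 e - p2 * d_u2 B p1 p2 0 e) = 0"
proof -
  have g: "((\<lambda>s. chi_fun chi0 chi1 s 0 e) has_field_derivative g') (at (p1 * p2))"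
    using gD by (simp add: chi_fun_def)
  note Zd = ham_component_partials[of "chi_fun chi0 chi1", OF g]
    ham_component_partials[of "\<lambda>h x e. - chi_fun chi0 chi1 h x e", OF DERIV_minus[OF g]]
  show ?thesis
    using br unfolding lie_bracket_def vf_apply_def Z_G_def fst_conv snd_conv Zd C0
    by (simp add: chi_fun_def algebra_simps power2_eq_square)
qed

text \<open>Along the rotation orbit \<open>u\<^sub>1u\<^sub>2\<close>, hence \<open>g\<close>, is constant, so the bracket equations become
  the ODE of \<open>orbit_euler_equations\<close>.\<close>
lemma euler_equations_of_bracket:
  fixes A B :: fn4 and g g' :: "complex \<Rightarrow> complex"
  assumes A: "powser4_on r cA A" and B: "powser4_on r cB B" and R: "R \<le> r"
    and z: "norm z3 < r" "norm z4 < r"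
    and bracket: "\<And>p1 p2. norm p1 < R \<Longrightarrow> norm p2 < R \<Longrightarrow>
      A p1 p2 z3 z4 * (g (p1*p2) + p1*p2*g' (p1*p2)) + B p1 p2 z3 z4 * p1^2 * g' (p1*p2)
        - g (p1*p2) * (p1 * d_u1 A p1 p2 z3 z4 - p2 * d_u2 A p1 p2 z3 z4) = 0 \<and>
      - A p1 p2 z3 z4 * p2^2 * g' (p1*p2) - B p1 p2 z3 z4 * (g (p1*p2) + p1*p2*g' (p1*p2))
        - g (p1*p2) * (p1 * d_u1 B p1 p2 z3 z4 - p2 * d_u2 B p1 p2 z3 z4) = 0"
    and u: "3 * norm u1 < R" "3 * norm u2 < R" and nz: "g (u1 * u2) \<noteq> 0"
  shows "u1 * d_u1 A u1 u2 z3 z4 - u2 * d_u2 A u1 u2 z3 z4 = A u1 u2 z3 z4"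
    and "u1 * d_u1 B u1 u2 z3 z4 - u2 * d_u2 B u1 u2 z3 z4 = - B u1 u2 z3 z4"
proof -
  define P1 where "P1 s = exp (\<i> * s) * u1" for s
  define P2 where "P2 s = exp (- (\<i> * s)) * u2" for s
  have P12: "P1 s * P2 s = u1 * u2" for s
    by (simp add: P1_def P2_def exp_minus field_simps)
  define a where "a s = A (P1 s) (P2 s) z3 z4" for s
  define b where "b s = B (P1 s) (P2 s) z3 z4" for s
  define Da where "Da s = P1 s * d_u1 A (P1 s) (P2 s) z3 z4 - P2 s * d_u2 A (P1 s) (P2 s) z3 z4" for s
  define Db where "Db s = P1 s * d_u1 B (P1 s) (P2 s) z3 z4 - P2 s * d_u2 B (P1 s) (P2 s) z3 z4" for s
  have ur: "3 * norm u1 < r" "3 * norm u2 < r" using u R by auto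
  have orbit: "(a has_field_derivative \<i> * Da s) (at s)" "(b has_field_derivative \<i> * Db s) (at s)"
    "g (u1 * u2) * (Da s - a s)
      = g' (u1 * u2) * (exp (\<i> * s) * u1) * (a s * (exp (- (\<i> * s)) * u2) + b s * (exp (\<i> * s) * u1))"
    "g (u1 * u2) * (Db s + b s)
      = - (g' (u1 * u2) * (exp (- (\<i> * s)) * u2) * (a s * (exp (- (\<i> * s)) * u2) + b s * (exp (\<i> * s) * u1)))"
    if s: "\<bar>Im s\<bar> < 1" for s
  proof -
    show "(a has_field_derivative \<i> * Da s) (at s)" "(b has_field_derivative \<i> * Db s) (at s)"
      using has_field_derivative_rotation[OF A ur z s] has_field_derivative_rotation[OF B ur z s]
      unfolding a_def b_def Da_def Db_def P1_def P2_def by auto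
    have "norm (P1 s) < R" "norm (P2 s) < R"
      using norm_rotation_le[OF s, of u1] norm_rotation_le[OF s, of u2] u
      unfolding P1_def P2_def by linarith+
    moreover have "g (P1 s * P2 s) = g (u1 * u2)" "g' (P1 s * P2 s) = g' (u1 * u2)"
      by (simp_all add: P12)
    ultimately have "g (u1 * u2) * (Da s - a s) = g' (u1 * u2) * P1 s * (a s * P2 s + b s * P1 s)"
      "g (u1 * u2) * (Db s + b s) = - (g' (u1 * u2) * P2 s * (a s * P2 s + b s * P1 s))"
      using bracket unfolding a_def b_def Da_def Db_def
      by (fastforce simp: algebra_simps power2_eq_square)+
    then show "g (u1 * u2) * (Da s - a s)
        = g' (u1 * u2) * (exp (\<i> * s) * u1) * (a s * (exp (- (\<i> * s)) * u2) + b s * (exp (\<i> * s) * u1))"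
      "g (u1 * u2) * (Db s + b s)
        = - (g' (u1 * u2) * (exp (- (\<i> * s)) * u2) * (a s * (exp (- (\<i> * s)) * u2) + b s * (exp (\<i> * s) * u1)))"
      by (simp_all add: P1_def P2_def)
  qed
  have "a (2 * complex_of_real pi) = a 0" "b (2 * complex_of_real pi) = b 0"
    by (simp_all add: a_def b_def P1_def P2_def)
  note ode = orbit_euler_equations[OF orbit(1) orbit(2) orbit(3) orbit(4) this nz]
  show "u1 * d_u1 A u1 u2 z3 z4 - u2 * d_u2 A u1 u2 z3 z4 = A u1 u2 z3 z4"
    "u1 * d_u1 B u1 u2 z3 z4 - u2 * d_u2 B u1 u2 z3 z4 = - B u1 u2 z3 z4"
    using ode by (simp_all add: a_def b_def Da_def Db_def P1_def P2_def)
qed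

lemma vert_sympl_sym_near0:
  assumes "vert_sympl_sym chi0 chi1 (A, B, C)"
  obtains r where "0 < r" "\<And>u1 u2 x e. norm u1 < r \<Longrightarrow> norm u2 < r \<Longrightarrow> norm x < r \<Longrightarrow> norm e < r \<Longrightarrow>
    C u1 u2 x e = 0 \<and> (d_x A u1 u2 x e = 0 \<and> d_x B u1 u2 x e = 0 \<and>
    d_u1 A u1 u2 x e + d_u2 B u1 u2 x e = 0) \<and>
    fst (lie_bracket (A, B, C) (Z_G chi0 chi1)) u1 u2 x e = 0 \<and>
    fst (snd (lie_bracket (A, B, C) (Z_G chi0 chi1))) u1 u2 x e = 0"
proof -
  from assms have "near0 (\<lambda>u1 u2 x e. C u1 u2 x e = 0)" "lie_area_vanishes (A, B, C)"
    "germ_eq (lie_bracket (A, B, C) (Z_G chi0 chi1)) zero_vf"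
    unfolding vert_sympl_sym_def by simp_all
  then have "near0 (\<lambda>u1 u2 x e. C u1 u2 x e = 0 \<and> (d_x A u1 u2 x e = 0 \<and> d_x B u1 u2 x e = 0 \<and>
      d_u1 A u1 u2 x e + d_u2 B u1 u2 x e = 0) \<and>
      fst (lie_bracket (A, B, C) (Z_G chi0 chi1)) u1 u2 x e = 0 \<and>
      fst (snd (lie_bracket (A, B, C) (Z_G chi0 chi1))) u1 u2 x e = 0)"
    unfolding lie_area_vanishes_def germ_eq_def zero_vf_def
    by (intro near0_conj) (auto simp: near0_def)
  then show ?thesis using that by (rule near0_radius) blast
qed

lemma vert_sympl_sym_coeff_support:
  assumes chi0: "analytic0_2 chi0" and nz: "chi0 0 0 \<noteq> 0" and X: "vert_sympl_sym chi0 chi1 (A, B, C)"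
  obtains R cA cB where "0 < R" "R \<le> 1" "powser4_on R cA A" "powser4_on R cB B"
    "\<And>i j k l. k \<noteq> 0 \<or> i \<noteq> Suc j \<Longrightarrow> cA i j k l = 0"
    "\<And>i j k l. k \<noteq> 0 \<or> j \<noteq> Suc i \<Longrightarrow> cB i j k l = 0"
proof -
  from X obtain rA cA rB cB where A: "0 < rA" "powser4_on rA cA A" and B: "0 < rB" "powser4_on rB cB B"
    unfolding vert_sympl_sym_def analytic0_4_def by auto
  obtain r1 where r1: "0 < r1"
      "\<And>u1 u2 x e. norm u1 < r1 \<Longrightarrow> norm u2 < r1 \<Longrightarrow> norm x < r1 \<Longrightarrow> norm e < r1 \<Longrightarrow>
        C u1 u2 x e = 0 \<and> (d_x A u1 u2 x e = 0 \<and> d_x B u1 u2 x e = 0 \<and>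
        d_u1 A u1 u2 x e + d_u2 B u1 u2 x e = 0) \<and>
        fst (lie_bracket (A, B, C) (Z_G chi0 chi1)) u1 u2 x e = 0 \<and>
        fst (snd (lie_bracket (A, B, C) (Z_G chi0 chi1))) u1 u2 x e = 0"
    by (rule vert_sympl_sym_near0[OF X]) blast
  from chi0 obtain rc where rc: "0 < rc" "\<And>h e. norm h < rc \<Longrightarrow> norm e < rc \<Longrightarrow>
      ((\<lambda>s. chi0 s e) has_field_derivative deriv (\<lambda>s. chi0 s e) h) (at h)"
    by (rule analytic0_2_deriv) blast
  from chi0 obtain r c where "0 < r" "powser2_on r c chi0" unfolding analytic0_2_def by blast
  from powser2_nonzero_near_0[OF this(2,1) nz] obtain \<delta> where \<delta>: "0 < \<delta>"
    "\<And>h e. norm h < \<delta> \<Longrightarrow> norm e < \<delta> \<Longrightarrow> chi0 h e \<noteq> 0" by blast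
  define R where "R = Min {rA, rB, r1, rc, \<delta>, 1}"
  have R: "0 < R" "R \<le> rA" "R \<le> rB" "R \<le> r1" "R \<le> rc" "R \<le> \<delta>" "R \<le> 1"
    using A(1) B(1) r1(1) rc(1) \<delta>(1) by (auto simp: R_def)
  have AR: "powser4_on R cA A" and BR: "powser4_on R cB B" using A B R by auto
  have small: "norm (p1 * p2) < R" if "norm p1 < R" "norm p2 < R" for p1 p2 :: complex
    using norm_mult_less[OF that R(7)] .
  have euler: "u1 * d_u1 A u1 u2 0 e - u2 * d_u2 A u1 u2 0 e = of_int 1 * A u1 u2 0 e"
    "u1 * d_u1 B u1 u2 0 e - u2 * d_u2 B u1 u2 0 e = of_int (- 1) * B u1 u2 0 e"
    if u: "3 * norm u1 < R" "3 * norm u2 < R" and e: "norm e < R" for u1 u2 e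
  proof -
    have "norm u1 < R" "norm u2 < R"
      using u norm_ge_zero[of u1] norm_ge_zero[of u2] by (auto simp del: norm_ge_zero)
    then have "chi0 (u1 * u2) e \<noteq> 0" using \<delta>(2) small e R by force
    moreover have "norm (0::complex) < R" using R by simp
    moreover have "A p1 p2 0 e * (chi0 (p1*p2) e + p1*p2*deriv (\<lambda>s. chi0 s e) (p1*p2))
          + B p1 p2 0 e * p1^2 * deriv (\<lambda>s. chi0 s e) (p1*p2)
        - chi0 (p1*p2) e * (p1 * d_u1 A p1 p2 0 e - p2 * d_u2 A p1 p2 0 e) = 0 \<and>
      - A p1 p2 0 e * p2^2 * deriv (\<lambda>s. chi0 s e) (p1*p2)
        - B p1 p2 0 e * (chi0 (p1*p2) e + p1*p2*deriv (\<lambda>s. chi0 s e) (p1*p2))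
        - chi0 (p1*p2) e * (p1 * d_u1 B p1 p2 0 e - p2 * d_u2 B p1 p2 0 e) = 0"
      if p: "norm p1 < R" "norm p2 < R" for p1 p2
    proof (rule bracket_with_Z_G_at_x0)
      have "norm p1 < r1" "norm p2 < r1" "norm (0::complex) < r1" "norm e < r1" using p e R by auto
      from r1(2)[OF this] show "fst (lie_bracket (A, B, C) (Z_G chi0 chi1)) p1 p2 0 e = 0"
        "fst (snd (lie_bracket (A, B, C) (Z_G chi0 chi1))) p1 p2 0 e = 0" "C p1 p2 0 e = 0"
        by simp_all
      show "((\<lambda>s. chi0 s e) has_field_derivative deriv (\<lambda>s. chi0 s e) (p1 * p2)) (at (p1 * p2))"
        using rc(2) small[OF p] e R by force
    qed
    ultimately have "u1 * d_u1 A u1 u2 0 e - u2 * d_u2 A u1 u2 0 e = A u1 u2 0 e"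
      "u1 * d_u1 B u1 u2 0 e - u2 * d_u2 B u1 u2 0 e = - B u1 u2 0 e"
      using euler_equations_of_bracket[OF AR BR order_refl _ _ _ u, where g="\<lambda>h. chi0 h e"
          and g'="\<lambda>h. deriv (\<lambda>s. chi0 s e) h"] e R
      by (smt (verit) order_less_le_trans)+
    then show "u1 * d_u1 A u1 u2 0 e - u2 * d_u2 A u1 u2 0 e = of_int 1 * A u1 u2 0 e"
      "u1 * d_u1 B u1 u2 0 e - u2 * d_u2 B u1 u2 0 e = of_int (- 1) * B u1 u2 0 e"
      by simp_all
  qed
  have dx: "d_x A u1 u2 x e = 0" "d_x B u1 u2 x e = 0"
    if "norm u1 < R" "norm u2 < R" "norm x < R" "norm e < R" for u1 u2 x e
    using r1(2)[of u1 u2 x e] that R by auto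
  show ?thesis
  proof (rule that[OF R(1,7) AR BR])
    fix i j k l :: nat
    show "k \<noteq> 0 \<or> i \<noteq> Suc j \<Longrightarrow> cA i j k l = 0"
      using coeff_support_of_euler_equation[OF AR R(1) order_refl dx(1) euler(1), of i j k l] by linarith
    show "k \<noteq> 0 \<or> j \<noteq> Suc i \<Longrightarrow> cB i j k l = 0"
      using coeff_support_of_euler_equation[OF BR R(1) order_refl dx(2) euler(2), of i j k l] by linarith
  qed
qed

lemma vert_sympl_sym_imp_ham:
  assumes chi0: "analytic0_2 chi0" and nz: "chi0 0 0 \<noteq> 0" and X: "vert_sympl_sym chi0 chi1 X"
  shows "\<exists>a. analytic0_2 a \<and> germ_eq X (ham_vf a)"
proof -
  obtain A B C where ABC: "X = (A, B, C)" by (metis prod.exhaust)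
  have X': "vert_sympl_sym chi0 chi1 (A, B, C)" using X ABC by simp
  obtain R cA cB where R: "0 < R" "R \<le> 1"
    and A: "powser4_on R cA A" and B: "powser4_on R cB B"
    and suppA: "\<And>i j k l. k \<noteq> 0 \<or> i \<noteq> Suc j \<Longrightarrow> cA i j k l = 0"
    and suppB: "\<And>i j k l. k \<noteq> 0 \<or> j \<noteq> Suc i \<Longrightarrow> cB i j k l = 0"
    by (rule vert_sympl_sym_coeff_support[OF chi0 nz X']) blast
  define \<rho> where "\<rho> = min (R / 2 * (R / 2)) (R / 2)"
  define a where "a = (\<lambda>h e. \<Sum>\<^sub>\<infinity>(j,l). cA (Suc j) j 0 l * h ^ j * e ^ l)"
  define b where "b = (\<lambda>h e. \<Sum>\<^sub>\<infinity>(j,l). cB j (Suc j) 0 l * h ^ j * e ^ l)"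
  note factorA = powser4_factor[of R cA A a, OF A R(1) suppA a_def, folded \<rho>_def]
  note factorB = powser4_factor[of R "\<lambda>i j k l. cB j i k l" "\<lambda>u1 u2 x e. B u2 u1 x e" b,
      OF powser4_swap12[OF B] R(1) suppB b_def, folded \<rho>_def]
  obtain r2 where r2: "0 < r2" "\<And>u1 u2 x e. norm u1 < r2 \<Longrightarrow> norm u2 < r2 \<Longrightarrow> norm x < r2 \<Longrightarrow>
      norm e < r2 \<Longrightarrow> C u1 u2 x e = 0 \<and> d_u1 A u1 u2 x e + d_u2 B u1 u2 x e = 0"
    using vert_sympl_sym_near0[OF X'] by (metis (no_types, lifting))
  define \<rho>1 where "\<rho>1 = min \<rho> r2"
  have "\<rho> \<le> R / 2" by (simp add: \<rho>_def)
  then have \<rho>1: "0 < \<rho>1" "\<rho>1 \<le> \<rho>" "\<rho>1 \<le> r2" "\<rho> \<le> R" "\<rho>1 \<le> 1"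
    using factorA(1) r2(1) R by (auto simp: \<rho>1_def)
  have small: "norm (u1 * u2) < \<rho>" "norm (u2 * u1) < \<rho>" "norm u1 < R" "norm u2 < R"
    if "norm u1 < \<rho>1" "norm u2 < \<rho>1" for u1 u2 :: complex
    using norm_mult_less[OF that] norm_mult_less[OF that(2,1)] that \<rho>1 by auto
  have eqA: "polydisc_eq \<rho>1 A (\<lambda>u1 u2 x e. a (u1 * u2) e * u1)"
  proof (intro allI impI)
    fix u1 u2 x e :: complex assume "norm u1 < \<rho>1 \<and> norm u2 < \<rho>1 \<and> norm x < \<rho>1 \<and> norm e < \<rho>1"
    with small[of u1 u2] \<rho>1 show "A u1 u2 x e = a (u1 * u2) e * u1" by (intro factorA(3)) auto
  qed
  have eqB: "polydisc_eq \<rho>1 B (\<lambda>u1 u2 x e. b (u1 * u2) e * u2)"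
  proof (intro allI impI)
    fix u1 u2 x e :: complex assume "norm u1 < \<rho>1 \<and> norm u2 < \<rho>1 \<and> norm x < \<rho>1 \<and> norm e < \<rho>1"
    with small[of u1 u2] \<rho>1 have "B u1 u2 x e = b (u2 * u1) e * u2" by (intro factorB(3)) auto
    then show "B u1 u2 x e = b (u1 * u2) e * u2" by (simp add: mult.commute)
  qed
  have ab: "a h e + b h e = 0" if "norm h < \<rho>1 * \<rho>1 / 2" "norm e < \<rho>1" for h e
  proof (rule divergence_free_ham_factors[OF \<rho>1(1,5) eqA eqB _ _ _ that])
    show "((\<lambda>s. a s e) has_field_derivative deriv (\<lambda>s. a s e) h) (at h)"
      "((\<lambda>s. b s e) has_field_derivative deriv (\<lambda>s. b s e) h) (at h)"
      if "norm h < \<rho>1" "norm e < \<rho>1" for h e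
      using powser2_deriv[OF factorA(2)] powser2_deriv[OF factorB(2)] that \<rho>1 by auto
    show "d_u1 A u1 u2 0 e + d_u2 B u1 u2 0 e = 0" if "norm u1 < \<rho>1" "norm u2 < \<rho>1" "norm e < \<rho>1"
      for u1 u2 e
      using r2(2)[of u1 u2 0 e] that \<rho>1 by auto
  qed
  have "germ_eq X (ham_vf a)"
    unfolding germ_eq_def ABC ham_vf_def fst_conv snd_conv
  proof (rule near0I[of "\<rho>1 / 2"])
    fix u1 u2 x e :: complex
    assume u: "norm u1 < \<rho>1 / 2" "norm u2 < \<rho>1 / 2" "norm x < \<rho>1 / 2" "norm e < \<rho>1 / 2"
    have "norm (u1 * u2) < \<rho>1 / 2 * (\<rho>1 / 2)"
      unfolding norm_mult by (rule mult_strict_mono[OF u(1,2)]) (use \<rho>1 in auto)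
    also have "\<dots> \<le> \<rho>1 * \<rho>1 / 2" by simp
    finally have "b (u1 * u2) e = - a (u1 * u2) e"
      using ab[of "u1 * u2" e] u(4) \<rho>1 by (simp add: eq_neg_iff_add_eq_0 add.commute)
    then show "A u1 u2 x e = a (u1 * u2) e * u1 \<and> B u1 u2 x e = - a (u1 * u2) e * u2 \<and> C u1 u2 x e = 0"
      using eqA eqB r2(2)[of u1 u2 x e] u \<rho>1 by auto
  qed (use \<rho>1 in simp)
  moreover have "analytic0_2 a" by (rule analytic0_2I[OF factorA(1,2)])
  ultimately show ?thesis by (intro exI conjI)
qed

lemma ham_imp_vert_sympl_sym:
  assumes chi0: "analytic0_2 chi0" and chi1: "analytic0_2 chi1" and a: "analytic0_2 a"
    and X: "germ_eq X (ham_vf a)"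
  shows "vert_sympl_sym chi0 chi1 X"
proof -
  obtain r where r: "0 < r" and X1: "polydisc_eq r (fst X) (\<lambda>u1 u2 x e. a (u1 * u2) e * u1)"
    and X2: "polydisc_eq r (fst (snd X)) (\<lambda>u1 u2 x e. - a (u1 * u2) e * u2)"
    and X3: "polydisc_eq r (snd (snd X)) (\<lambda>u1 u2 x e. 0)"
    using germ_eq_ham_vfE[OF X] by blast
  have "analytic0_4 (fst X) \<and> analytic0_4 (fst (snd X)) \<and> analytic0_4 (snd (snd X))"
    by (rule ham_germ_components_analytic[OF a r X1 X2 X3])
  moreover obtain ra where ra: "0 < ra" "\<And>h e. norm h < ra \<Longrightarrow> norm e < ra \<Longrightarrow>
      ((\<lambda>s. a s e) has_field_derivative deriv (\<lambda>s. a s e) h) (at h)"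
    using analytic0_2_deriv[OF a] by blast
  moreover obtain r0 where r0: "0 < r0" "\<And>h e. norm h < r0 \<Longrightarrow> norm e < r0 \<Longrightarrow>
      ((\<lambda>s. chi0 s e) has_field_derivative deriv (\<lambda>s. chi0 s e) h) (at h)"
    using analytic0_2_deriv[OF chi0] by blast
  moreover obtain r1 where r1: "0 < r1" "\<And>h e. norm h < r1 \<Longrightarrow> norm e < r1 \<Longrightarrow>
      ((\<lambda>s. chi1 s e) has_field_derivative deriv (\<lambda>s. chi1 s e) h) (at h)"
    using analytic0_2_deriv[OF chi1] by blast
  define \<rho> where "\<rho> = Min {r, ra, r0, r1, 1}"
  have \<rho>: "0 < \<rho>" "\<rho> \<le> r" "\<rho> \<le> ra" "\<rho> \<le> r0" "\<rho> \<le> r1" "\<rho> \<le> 1"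
    using r ra(1) r0(1) r1(1) by (auto simp: \<rho>_def)
  have aD: "((\<lambda>s. a s e) has_field_derivative deriv (\<lambda>s. a s e) (p1 * p2)) (at (p1 * p2))"
    and chiD: "((\<lambda>s. chi_fun chi0 chi1 s x e) has_field_derivative
        deriv (\<lambda>s. chi0 s e) (p1 * p2) + x * deriv (\<lambda>s. chi1 s e) (p1 * p2)) (at (p1 * p2))"
    if "norm p1 < \<rho>" "norm p2 < \<rho>" "norm e < \<rho>" for p1 p2 x e
  proof -
    have "norm (p1 * p2) < \<rho>" using norm_mult_less[OF that(1,2) \<rho>(6)] .
    then have "norm (p1 * p2) < ra" "norm (p1 * p2) < r0" "norm (p1 * p2) < r1"
      "norm e < ra" "norm e < r0" "norm e < r1"
      using that(3) \<rho> by auto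
    then show "((\<lambda>s. a s e) has_field_derivative deriv (\<lambda>s. a s e) (p1 * p2)) (at (p1 * p2))"
      "((\<lambda>s. chi_fun chi0 chi1 s x e) has_field_derivative
        deriv (\<lambda>s. chi0 s e) (p1 * p2) + x * deriv (\<lambda>s. chi1 s e) (p1 * p2)) (at (p1 * p2))"
      unfolding chi_fun_def using ra(2) DERIV_add[OF r0(2) DERIV_cmult[OF r1(2)]] by auto
  qed
  have "near0 (\<lambda>u1 u2 x e. snd (snd X) u1 u2 x e = 0)"
    using X3 by (intro near0I[OF \<rho>(1)]) (use \<rho> in auto)
  moreover have "lie_area_vanishes X"
    unfolding lie_area_vanishes_def
  proof (rule near0I[OF \<rho>(1)])
    fix p1 p2 x e :: complex assume p: "norm p1 < \<rho>" "norm p2 < \<rho>" "norm x < \<rho>" "norm e < \<rho>"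
    then have p': "norm p1 < r" "norm p2 < r" "norm x < r" "norm e < r" using \<rho> by auto
    note partials = ham_component_partials[of "\<lambda>h x e. a h e", OF aD[OF p(1,2,4)]]
      ham_component_partials[of "\<lambda>h x e. - a h e", OF DERIV_minus[OF aD[OF p(1,2,4)]]]
    show "d_u1 (fst X) p1 p2 x e + d_u2 (fst (snd X)) p1 p2 x e = 0 \<and>
        - d_x (fst (snd X)) p1 p2 x e = 0 \<and> d_x (fst X) p1 p2 x e = 0"
      unfolding polydisc_eq_partials[OF X1 p'] polydisc_eq_partials[OF X2 p'] partials d_x_const_in_x
      by simp
  qed
  moreover have "germ_eq (lie_bracket X (Z_G chi0 chi1)) zero_vf"
    unfolding germ_eq_def zero_vf_def fst_conv snd_conv
  proof (rule near0I[OF \<rho>(1)])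
    fix p1 p2 x e :: complex assume p: "norm p1 < \<rho>" "norm p2 < \<rho>" "norm x < \<rho>" "norm e < \<rho>"
    show "fst (lie_bracket X (Z_G chi0 chi1)) p1 p2 x e = 0 \<and>
        fst (snd (lie_bracket X (Z_G chi0 chi1))) p1 p2 x e = 0 \<and>
        snd (snd (lie_bracket X (Z_G chi0 chi1))) p1 p2 x e = 0"
    proof (rule lie_bracket_ham_forms_eq_0[where a=a and g="chi_fun chi0 chi1",
          OF _ _ _ _ _ _ _ aD[OF p(1,2,4)] chiD[OF p(1,2,4)] p])
      show "d_u1 (snd (snd (Z_G chi0 chi1))) p1 p2 x e = 0" "d_u2 (snd (snd (Z_G chi0 chi1))) p1 p2 x e = 0"
        by (simp_all add: Z_G_def d_u1_def d_u2_def)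
    qed (use X1 X2 X3 \<rho> in \<open>auto simp: Z_G_def\<close>)
  qed
  ultimately show ?thesis unfolding vert_sympl_sym_def by blast
qed

lemma ham_germs_commute:
  assumes a: "analytic0_2 a" and b: "analytic0_2 b"
    and X: "germ_eq X (ham_vf a)" and Y: "germ_eq Y (ham_vf b)"
  shows "germ_eq (lie_bracket X Y) zero_vf"
proof -
  obtain r where r: "0 < r" and X1: "polydisc_eq r (fst X) (\<lambda>u1 u2 x e. a (u1 * u2) e * u1)"
    and X2: "polydisc_eq r (fst (snd X)) (\<lambda>u1 u2 x e. - a (u1 * u2) e * u2)"
    and X3: "polydisc_eq r (snd (snd X)) (\<lambda>u1 u2 x e. 0)"
    using germ_eq_ham_vfE[OF X] by blast
  obtain s where s: "0 < s" and Y1: "polydisc_eq s (fst Y) (\<lambda>u1 u2 x e. b (u1 * u2) e * u1)"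
    and Y2: "polydisc_eq s (fst (snd Y)) (\<lambda>u1 u2 x e. - b (u1 * u2) e * u2)"
    and Y3: "polydisc_eq s (snd (snd Y)) (\<lambda>u1 u2 x e. 0)"
    using germ_eq_ham_vfE[OF Y] by blast
  obtain ra where ra: "0 < ra" "\<And>h e. norm h < ra \<Longrightarrow> norm e < ra \<Longrightarrow>
      ((\<lambda>s. a s e) has_field_derivative deriv (\<lambda>s. a s e) h) (at h)"
    using analytic0_2_deriv[OF a] by blast
  obtain rb where rb: "0 < rb" "\<And>h e. norm h < rb \<Longrightarrow> norm e < rb \<Longrightarrow>
      ((\<lambda>s. b s e) has_field_derivative deriv (\<lambda>s. b s e) h) (at h)"
    using analytic0_2_deriv[OF b] by blast
  define \<rho> where "\<rho> = Min {r, s, ra, rb, 1}"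
  have \<rho>: "0 < \<rho>" "\<rho> \<le> r" "\<rho> \<le> s" "\<rho> \<le> ra" "\<rho> \<le> rb" "\<rho> \<le> 1"
    using r s ra(1) rb(1) by (auto simp: \<rho>_def)
  show ?thesis
    unfolding germ_eq_def zero_vf_def fst_conv snd_conv
  proof (rule near0I[OF \<rho>(1)])
    fix p1 p2 x e :: complex assume p: "norm p1 < \<rho>" "norm p2 < \<rho>" "norm x < \<rho>" "norm e < \<rho>"
    have p': "norm p1 < s" "norm p2 < s" "norm x < s" "norm e < s" using p \<rho> by auto
    have h: "norm (p1 * p2) < \<rho>" using norm_mult_less[OF p(1,2) \<rho>(6)] .
    show "fst (lie_bracket X Y) p1 p2 x e = 0 \<and> fst (snd (lie_bracket X Y)) p1 p2 x e = 0 \<and>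
        snd (snd (lie_bracket X Y)) p1 p2 x e = 0"
    proof (rule lie_bracket_ham_forms_eq_0[where g="\<lambda>h x e. b h e"])
      show "d_u1 (snd (snd Y)) p1 p2 x e = 0" "d_u2 (snd (snd Y)) p1 p2 x e = 0"
        unfolding polydisc_eq_partials[OF Y3 p'] by (simp_all add: d_u1_def d_u2_def)
      show "((\<lambda>s. a s e) has_field_derivative deriv (\<lambda>s. a s e) (p1 * p2)) (at (p1 * p2))"
        "((\<lambda>s. b s e) has_field_derivative deriv (\<lambda>s. b s e) (p1 * p2)) (at (p1 * p2))"
        using ra(2) rb(2) h p(4) \<rho> by auto
    qed (use X1 X2 X3 Y1 Y2 p \<rho> in auto)
  qed
qed

theorem mainTheorem12:
  fixes chi0 chi1 :: "complex \<Rightarrow> complex \<Rightarrow> complex"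
  assumes "analytic0_2 chi0" and "analytic0_2 chi1" and "chi0 0 0 \<noteq> 0"
  shows "(\<forall>X. vert_sympl_sym chi0 chi1 X \<longleftrightarrow> (\<exists>a. analytic0_2 a \<and> germ_eq X (ham_vf a)))
       \<and> (\<forall>X Y. vert_sympl_sym chi0 chi1 X \<and> vert_sympl_sym chi0 chi1 Y
              \<longrightarrow> germ_eq (lie_bracket X Y) zero_vf)"
proof (intro conjI allI iffI impI)
  fix X assume "vert_sympl_sym chi0 chi1 X"
  then show "\<exists>a. analytic0_2 a \<and> germ_eq X (ham_vf a)"
    by (rule vert_sympl_sym_imp_ham[OF assms(1,3)])
next
  fix X assume "\<exists>a. analytic0_2 a \<and> germ_eq X (ham_vf a)"
  then obtain a where "analytic0_2 a" "germ_eq X (ham_vf a)" by blast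
  then show "vert_sympl_sym chi0 chi1 X" by (rule ham_imp_vert_sympl_sym[OF assms(1,2)])
next
  fix X Y assume "vert_sympl_sym chi0 chi1 X \<and> vert_sympl_sym chi0 chi1 Y"
  then obtain a b where "analytic0_2 a" "germ_eq X (ham_vf a)" "analytic0_2 b" "germ_eq Y (ham_vf b)"
    using vert_sympl_sym_imp_ham[OF assms(1,3)] by meson
  then show "germ_eq (lie_bracket X Y) zero_vf" by (intro ham_germs_commute)
qed

end
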